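(* Let $\mathrm{E}:\mathbb{R}^{n_1\times\dots\times n_d}\to\mathbb{R}$ be continuously differentiable with gradient $\nabla\mathrm{E}$ (with respect to the Euclidean inner product), and consider the gradient system $\dot A=-\nabla\mathrm{E}(A)$. Run the rank-augmenting TTN integrator (described in the context, in real arithmetic) on the maximal tree $\bar\tau=(\tau_1,\dots,\tau_m)$ with an orthonormal starting TTN $Y_{\bar\tau}^0$ of full tree rank and $F(t,Y)=-\nabla\mathrm{E}(Y)$, over a step $t_0<t_1$ with step size $h=t_1-t_0>0$. Let $\widehat{\mathbf{U}}_{\tau_i}$ be the augmented basis matrices and $\widehat C_{\bar\tau}(t)$ the solution of the connection-tensor differential equation in the top-level call, and $\widehat Y_{\bar\tau}(t)=\widehat C_{\bar\tau}(t)\times_{i=1}^m\widehat{\mathbf{U}}_{\tau_i}$. Then the rank-augmented result satisfies $$\mathrm{E}(\widehat Y_{\bar\tau}^1)\le \mathrm{E}(Y_{\bar\tau}^0)-\alpha^2h,\qquad \alpha=\min_{0\le\mu\le1}\Big\|\nabla\mathrm{E}\big(\widehat Y_{\bar\tau}(t_0+\mu h)\big)\times_{i=1}^m\widehat{\mathbf{U}}_{\tau_i}^{\top}\Big\|.$$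
   Context: Tensor notation: for a tensor with modes indexed $0,1,\dots,m$, $\mathrm{mat}_i$ is the mode-$i$ matricization (rows indexed by the $i$th index) and $\mathrm{ten}_i$ its inverse; $A\times_i\mathbf{B}$ is the mode-$i$ product, $\mathrm{mat}_i(A\times_i\mathbf{B})=\mathbf{B}\,\mathrm{mat}_i(A)$; $\times_{i=1}^m$ denotes successive products in modes $1,\dots,m$; ${}^*$ is conjugate transpose (the transpose here, since everything is real); $\|\cdot\|$ and $\langle X,Y\rangle$ are the Euclidean norm and inner product of the vectors of entries. Trees: given a finite leaf set $\mathcal{L}=\{1,\dots,d\}$, each leaf $l$ is a tree with leaf set $\{l\}$; if $\tau_1,\dots,\tau_m$ ($m\ge2$) are trees with pairwise disjoint leaf sets, the ordered tuple $\tau=(\tau_1,\dots,\tau_m)$ is a tree whose leaf set is their union; the $\tau_i$ are its direct subtrees, and subtrees are defined recursively ($\sigma\le\tau$, $\sigma<\tau$ if also $\sigma\ne\tau$). Fix a tree $\bar\tau$ with leaf set $\mathcal{L}$. Tree tensor networks (TTN): given dimensions $n_l$ and ranks $r_\sigma$ ($\sigma\le\bar\tau$, $r_{\bar\tau}=1$), basis matrices $\mathbf{U}_l\in\mathbb{R}^{n_l\times r_l}$ at leaves and connection tensors $C_\tau\in\mathbb{R}^{r_\tau\times r_{\tau_1}\times\dots\times r_{\tau_m}}$ of full multilinear rank at non-leaf subtrees $\tau=(\tau_1,\dots,\tau_m)$, set $X_l=\mathbf{U}_l^\top$, $X_\tau=C_\tau\times_0\mathbf{I}_{r_\tau}\times_{i=1}^m\mathbf{U}_{\tau_i}\in\mathcal{V}_\tau:=\mathbb{R}^{r_\tau\times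 n_{\tau_1}\times\dots\times n_{\tau_m}}$ with $n_\tau=\prod_i n_{\tau_i}$, and $\mathbf{U}_\tau=\mathrm{mat}_0(X_\tau)^\top$; for a leaf, $\mathcal{V}_l:=\mathbb{R}^{r_l\times n_l}$. The TTN is orthonormal if every $\mathbf{U}_\sigma$, $\sigma<\bar\tau$, has orthonormal columns. Full tree rank means all connection tensors have full multilinear rank. $\mathcal{V}_{\bar\tau}$ is identified with $\mathbb{R}^{n_1\times\dots\times n_d}$. Reduced operators and starting values: for a non-leaf $\tau=(\tau_1,\dots,\tau_m)$, a function $F_\tau:[t_0,t_1]\times\mathcal{V}_\tau\to\mathcal{V}_\tau$ and a starting TTN $Y_\tau^0=C_\tau^0\times_0\mathbf{I}_{r_\tau}\times_{i=1}^m\mathbf{U}_{\tau_i}^0$ with $\mathbf{U}_{\tau_i}^0=\mathrm{mat}_0(X_{\tau_i}^0)^\top$, compute QR decompositions $\mathrm{mat}_i(C_\tau^0)^\top=\mathbf{Q}_{\tau_i}^0\mathbf{S}_{\tau_i}^{0,\top}$, let $\mathbf{V}_{\tau_i}^0=\mathrm{mat}_i\big(\mathrm{ten}_i(\mathbf{Q}_{\tau_i}^{0,\top})\times_0\mathbf{I}_{r_\tau}\times_{j\ne i}\mathbf{U}_{\tau_j}^0\big)^\top$, prolongation $\pi_{\tau,i}(Y)=\mathrm{ten}_i\big((\mathbf{V}_{\tau_i}^0\mathrm{mat}_0(Y))^\top\big)$, restriction $\pi_{\tau,i}^\dagger(Z)=\mathrm{ten}_0\big((\mathrm{mat}_i(Z)\mathbf{V}_{\tau_i}^0)^\top\big)$,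 and set $F_{\tau_i}(t,Y)=\pi_{\tau,i}^\dagger(F_\tau(t,\pi_{\tau,i}(Y)))$ and $Y_{\tau_i}^0=X_{\tau_i}^0\times_0\mathbf{S}_{\tau_i}^{0,\top}$. Rank-augmenting TTN integrator on $(\tau,Y_\tau^0,F_\tau,t_0,t_1)$, $\tau$ non-leaf: (1) for each $i$: if $\tau_i=l$ is a leaf, solve $\dot Y_l=F_l(t,Y_l)$, $Y_l(t_0)=Y_l^0$, let $\widehat{\mathbf{U}}_l$ have orthonormal columns spanning the range of $(Y_l(t_1)^\top,\mathbf{U}_l^0)$, and $\widehat{\mathbf{M}}_l=\widehat{\mathbf{U}}_l^*\mathbf{U}_l^0$; otherwise call the integrator recursively on $(\tau_i,Y_{\tau_i}^0,F_{\tau_i},t_0,t_1)$, obtaining $\widehat Y_{\tau_i}^1$ (with root connection tensor $\widehat C_{\tau_i}^1$) and $\widehat C_{\tau_i}^0$, let $\widehat{\mathbf{Q}}_{\tau_i}$ have orthonormal columns spanning the range of $(\mathrm{mat}_0(\widehat C_{\tau_i}^1)^\top,\mathrm{mat}_0(\widehat C_{\tau_i}^0)^\top)$, let $\widehat X_{\tau_i}$ be $\widehat Y_{\tau_i}^1$ with root connection tensor replaced by $\mathrm{ten}_0(\widehat{\mathbf{Q}}_{\tau_i}^\top)$, and set $\widehat{\mathbf{U}}_{\tau_i}=\mathrm{mat}_0(\widehat X_{\tau_i})^\top$, $\widehat{\mathbf{M}}_{\tau_i}=\widehat{\mathbf{U}}_{\tau_i}^*\mathbf{U}_{\tau_i}^0$.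 (2) Set $\widehat C_\tau^0=C_\tau^0\times_{i=1}^m\widehat{\mathbf{M}}_{\tau_i}$, solve $\dot{\widehat C}_\tau(t)=F_\tau\big(t,\widehat C_\tau(t)\times_0\mathbf{I}_{r_\tau}\times_{i=1}^m\widehat{\mathbf{U}}_{\tau_i}\big)\times_{i=1}^m\widehat{\mathbf{U}}_{\tau_i}^*$, $\widehat C_\tau(t_0)=\widehat C_\tau^0$, set $\widehat C_\tau^1=\widehat C_\tau(t_1)$, and return $\widehat Y_\tau^1=\widehat C_\tau^1\times_0\mathbf{I}_{r_\tau}\times_{i=1}^m\widehat{\mathbf{U}}_{\tau_i}$ and $\widehat C_\tau^0$. At the top level, $F_{\bar\tau}=F$ and $Y_{\bar\tau}^0$ is the given starting TTN. All differential equations are assumed to be solved exactly. *)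

theory Defs
  imports Complex_Main
begin

text \<open>A tensor is a pair (shape, entries); entries are indexed by lists of
natural numbers (0-based), and are kept zero outside the index box.
Matrices are tensors of order 2 (shape [rows, cols]).\<close>

type_synonym tsr = "nat list \<times> (nat list \<Rightarrow> real)"

definition idx :: "nat list \<Rightarrow> nat list set" where
  "idx S = {is. length is = length S \<and> (\<forall>k<length S. is ! k < S ! k)}"

definition mk :: "nat list \<Rightarrow> (nat list \<Rightarrow> real) \<Rightarrow> tsr" where
  "mk S f = (S, \<lambda>is. if is \<in> idx S then f is else 0)"

definition wf_t :: "tsr \<Rightarrow> bool" where
  "wf_t A \<longleftrightarrow> (\<forall>is. is \<notin> idx (fst A) \<longrightarrow> snd A is = 0)"

definition tens_space :: "nat list \<Rightarrow> tsr set" where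
  "tens_space S = {A. fst A = S \<and> wf_t A}"

definition zeroT :: "nat list \<Rightarrow> tsr" where
  "zeroT S = mk S (\<lambda>_. 0)"

definition tsub :: "tsr \<Rightarrow> tsr \<Rightarrow> tsr" where
  "tsub A B = mk (fst A) (\<lambda>is. snd A is - snd B is)"

definition tneg :: "tsr \<Rightarrow> tsr" where
  "tneg A = mk (fst A) (\<lambda>is. - snd A is)"

definition tinner :: "tsr \<Rightarrow> tsr \<Rightarrow> real" where
  "tinner A B = (\<Sum>is\<in>idx (fst A). snd A is * snd B is)"

definition tnorm :: "tsr \<Rightarrow> real" where
  "tnorm A = sqrt (tinner A A)"

definition nrows :: "tsr \<Rightarrow> nat" where "nrows M = fst M ! 0"
definition ncols :: "tsr \<Rightarrow> nat" where "ncols M = fst M ! 1"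

text \<open>Mode-i product  A \<times>_i B  (B a matrix with ncols B = size of mode i of A):
 mat_i(A \<times>_i B) = B mat_i(A).\<close>
definition mode_prod :: "tsr \<Rightarrow> nat \<Rightarrow> tsr \<Rightarrow> tsr" where
  "mode_prod A i B = mk ((fst A)[i := fst B ! 0])
     (\<lambda>is. \<Sum>j<fst A ! i. snd B [is ! i, j] * snd A (is[i := j]))"

definition mmul :: "tsr \<Rightarrow> tsr \<Rightarrow> tsr" where
  "mmul B A = mode_prod A 0 B"

definition tr :: "tsr \<Rightarrow> tsr" where
  "tr M = mk [ncols M, nrows M] (\<lambda>is. snd M [is ! 1, is ! 0])"

definition eye :: "nat \<Rightarrow> tsr" where
  "eye n = mk [n, n] (\<lambda>is. if is ! 0 = is ! 1 then 1 else 0)"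

fun mprods_from :: "nat \<Rightarrow> tsr \<Rightarrow> tsr list \<Rightarrow> tsr" where
  "mprods_from k A [] = A"
| "mprods_from k A (U # Us) = mprods_from (Suc k) (mode_prod A k U) Us"

definition mprods :: "tsr \<Rightarrow> tsr list \<Rightarrow> tsr" where
  "mprods A Us = mprods_from 1 A Us"

text \<open>Mixed-radix linearisation of multi-indices (column index of a matricization)
and its inverse.\<close>
fun lin :: "nat list \<Rightarrow> nat list \<Rightarrow> nat" where
  "lin (d # ds) (j # js) = j * prod_list ds + lin ds js"
| "lin _ _ = 0"

fun delin :: "nat list \<Rightarrow> nat \<Rightarrow> nat list" where
  "delin [] k = []"
| "delin (d # ds) k = (k div prod_list ds) # delin ds (k mod prod_list ds)"

definition remove_nth :: "nat \<Rightarrow> 'a list \<Rightarrow> 'a list" where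
  "remove_nth i xs = take i xs @ drop (Suc i) xs"

definition insert_nth :: "nat \<Rightarrow> 'a \<Rightarrow> 'a list \<Rightarrow> 'a list" where
  "insert_nth i x xs = take i xs @ x # drop i xs"

text \<open>mode-i matricization mat_i and its inverse ten_i (w.r.t. a target shape S).\<close>
definition matz :: "nat \<Rightarrow> tsr \<Rightarrow> tsr" where
  "matz i A = mk [fst A ! i, prod_list (remove_nth i (fst A))]
     (\<lambda>rc. snd A (insert_nth i (rc ! 0) (delin (remove_nth i (fst A)) (rc ! 1))))"

definition tenz :: "nat \<Rightarrow> nat list \<Rightarrow> tsr \<Rightarrow> tsr" where
  "tenz i S M = mk S (\<lambda>is. snd M [is ! i, lin (remove_nth i S) (remove_nth i is)])"

definition is_mat :: "tsr \<Rightarrow> bool" where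
  "is_mat M \<longleftrightarrow> wf_t M \<and> length (fst M) = 2"

definition orthcols :: "tsr \<Rightarrow> bool" where
  "orthcols U \<longleftrightarrow> is_mat U \<and> mmul (tr U) U = eye (ncols U)"

definition colspan :: "tsr \<Rightarrow> tsr set" where
  "colspan M = {mmul M x | x. wf_t x \<and> fst x = [ncols M, 1]}"

definition hcat :: "tsr \<Rightarrow> tsr \<Rightarrow> tsr" where
  "hcat A B = mk [nrows A, ncols A + ncols B]
     (\<lambda>is. if is ! 1 < ncols A then snd A [is ! 0, is ! 1]
           else snd B [is ! 0, is ! 1 - ncols A])"

definition onb_of :: "tsr \<Rightarrow> tsr \<Rightarrow> bool" where
  "onb_of U A \<longleftrightarrow> orthcols U \<and> nrows U = nrows A \<and> colspan U = colspan A"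

definition upper_tri :: "tsr \<Rightarrow> bool" where
  "upper_tri R \<longleftrightarrow> (\<forall>i j. j < i \<longrightarrow> snd R [i, j] = 0)"

definition full_row_rank :: "tsr \<Rightarrow> bool" where
  "full_row_rank M \<longleftrightarrow> (\<forall>v. wf_t v \<and> fst v = [nrows M, 1] \<and>
      mmul (tr M) v = zeroT [ncols M, 1] \<longrightarrow> v = zeroT [nrows M, 1])"

definition full_mlrank :: "tsr \<Rightarrow> bool" where
  "full_mlrank C \<longleftrightarrow> (\<forall>k<length (fst C). full_row_rank (matz k C))"

text \<open>A TTN mirrors its tree: a leaf stores its basis matrix U_l (n_l x r_l),
a non-leaf subtree tau = (tau_1,..,tau_m) stores its connection tensor C_tau
(shape r_tau x r_tau1 x .. x r_taum) and the TTNs of its direct subtrees.\<close>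
datatype ttn = TL tsr | TN tsr "ttn list"

text \<open>X_tau (X_l = U_l^T, X_tau = C_tau x_{i} U_{tau_i}) with U_tau = mat_0(X_tau)^T.\<close>
fun ttnX :: "ttn \<Rightarrow> tsr" where
  "ttnX (TL U) = tr U"
| "ttnX (TN C Ys) = mprods C (map (\<lambda>Y. tr (matz 0 (ttnX Y))) Ys)"

definition Ubasis :: "ttn \<Rightarrow> tsr" where
  "Ubasis Y = tr (matz 0 (ttnX Y))"

fun ttn_wf :: "ttn \<Rightarrow> bool" where
  "ttn_wf (TL U) \<longleftrightarrow> is_mat U \<and> nrows U > 0 \<and> ncols U > 0"
| "ttn_wf (TN C Ys) \<longleftrightarrow> wf_t C \<and> 2 \<le> length Ys \<and> length (fst C) = Suc (length Ys)
     \<and> (\<forall>x\<in>set (fst C). 0 < x)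
     \<and> (\<forall>k<length Ys. fst C ! Suc k = ncols (Ubasis (Ys ! k)))
     \<and> list_all ttn_wf Ys"

fun ttn_orth :: "ttn \<Rightarrow> bool" where
  "ttn_orth (TL U) \<longleftrightarrow> True"
| "ttn_orth (TN C Ys) \<longleftrightarrow> list_all (\<lambda>Y. orthcols (Ubasis Y)) Ys \<and> list_all ttn_orth Ys"

fun ttn_ftr :: "ttn \<Rightarrow> bool" where
  "ttn_ftr (TL U) \<longleftrightarrow> True"
| "ttn_ftr (TN C Ys) \<longleftrightarrow> full_mlrank C \<and> list_all ttn_ftr Ys"

definition ode_sol :: "(real \<Rightarrow> tsr \<Rightarrow> tsr) \<Rightarrow> real \<Rightarrow> real \<Rightarrow> tsr \<Rightarrow> (real \<Rightarrow> tsr) \<Rightarrow> bool" where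
  "ode_sol F t0 t1 Y0 y \<longleftrightarrow> y t0 = Y0 \<and>
     (\<forall>t\<in>{t0..t1}. y t \<in> tens_space (fst Y0) \<and>
        (\<forall>is. ((\<lambda>s. snd (y s) is) has_real_derivative snd (F t (y t)) is) (at t within {t0..t1})))"

definition grad_C1 :: "nat list \<Rightarrow> (tsr \<Rightarrow> real) \<Rightarrow> (tsr \<Rightarrow> tsr) \<Rightarrow> bool" where
  "grad_C1 S E G \<longleftrightarrow> (\<forall>A\<in>tens_space S. G A \<in> tens_space S \<and>
     (\<forall>\<epsilon>>0. \<exists>\<delta>>0. \<forall>B\<in>tens_space S. tnorm (tsub B A) < \<delta> \<longrightarrow>
        \<bar>E B - E A - tinner (G A) (tsub B A)\<bar> \<le> \<epsilon> * tnorm (tsub B A)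
        \<and> tnorm (tsub (G B) (G A)) < \<epsilon>))"

text \<open>For a node with connection tensor C0 and child bases Us (U_{tau_j}^0), and the
Q-factor Q of the QR decomposition of mat_{k+1}(C0)^T (child k, 0-based, is mode k+1):
V_{tau_k}^0 = mat_{k+1}(ten_{k+1}(Q^T) x_{j<>k} U_{tau_j}^0)^T.\<close>
definition Vmat :: "tsr \<Rightarrow> tsr list \<Rightarrow> nat \<Rightarrow> tsr \<Rightarrow> tsr" where
  "Vmat C0 Us k Q = tr (matz (Suc k)
      (mprods (tenz (Suc k) (fst C0) (tr Q)) (Us[k := eye (fst C0 ! Suc k)])))"

text \<open>pi_{tau,k}(Y) = ten_{k+1}((V mat_0(Y))^T), landing in V_tau.\<close>
definition prolong :: "tsr \<Rightarrow> tsr list \<Rightarrow> nat \<Rightarrow> tsr \<Rightarrow> tsr \<Rightarrow> tsr" where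
  "prolong C0 Us k Q Y = tenz (Suc k) (hd (fst C0) # map nrows Us)
      (tr (mmul (Vmat C0 Us k Q) (matz 0 Y)))"

text \<open>pi_{tau,k}^dagger(Z) = ten_0((mat_{k+1}(Z) V)^T), landing in V_{tau_k} (shape Sc).\<close>
definition restrict :: "tsr \<Rightarrow> tsr list \<Rightarrow> nat \<Rightarrow> tsr \<Rightarrow> nat list \<Rightarrow> tsr \<Rightarrow> tsr" where
  "restrict C0 Us k Q Sc Z = tenz 0 Sc (tr (mmul (matz (Suc k) Z) (Vmat C0 Us k Q)))"

definition reduced_F ::
  "(real \<Rightarrow> tsr \<Rightarrow> tsr) \<Rightarrow> tsr \<Rightarrow> ttn list \<Rightarrow> nat \<Rightarrow> tsr \<Rightarrow> real \<Rightarrow> tsr \<Rightarrow> tsr" where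
  "reduced_F F C0 Ys k Q t Y =
     restrict C0 (map Ubasis Ys) k Q (fst (ttnX (Ys ! k)))
       (F t (prolong C0 (map Ubasis Ys) k Q Y))"

text \<open>rai Y0 F t0 t1 Uhs c Y1 C0h: a run of the integrator on (tau, Y0, F, t0, t1),
tau the tree of Y0 (non-leaf), in which the augmented bases of the direct subtrees are
Uhs, the solution of the connection-tensor ODE is c, and the outputs are the
TTN Y1 = \<widehat>Y_tau^1 and C0h = \<widehat>C_tau^0.  Nondeterminism (choice of QR factors,
of orthonormal bases, of exact ODE solutions) is modelled by a relation.
Qs, Rs: QR factors  mat_{k+1}(C0)^T = Q_k R_k (R_k = S_k^T upper triangular).
Xhs: the TTNs \<widehat>X_{tau_k} (for a leaf: TL \<widehat>U_l).\<close>
inductive rai :: "ttn \<Rightarrow> (real \<Rightarrow> tsr \<Rightarrow> tsr) \<Rightarrow> real \<Rightarrow> real \<Rightarrow> tsr list \<Rightarrow> (real \<Rightarrow> tsr)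
                    \<Rightarrow> ttn \<Rightarrow> tsr \<Rightarrow> bool" where
  step: "\<lbrakk> length Qs = length Ys; length Rs = length Ys; length Xhs = length Ys;
     \<forall>k<length Ys.
        fst (Rs ! k) = [fst C0 ! Suc k, fst C0 ! Suc k] \<and> wf_t (Rs ! k) \<and> upper_tri (Rs ! k)
        \<and> fst (Qs ! k) = [prod_list (remove_nth (Suc k) (fst C0)), fst C0 ! Suc k]
        \<and> orthcols (Qs ! k)
        \<and> tr (matz (Suc k) C0) = mmul (Qs ! k) (Rs ! k)
        \<and> ((\<exists>U y Uh. Ys ! k = TL U
               \<and> ode_sol (reduced_F F C0 Ys k (Qs ! k)) t0 t1 (mmul (Rs ! k) (tr U)) y
               \<and> onb_of Uh (hcat (tr (y t1)) U)
               \<and> Xhs ! k = TL Uh)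
          \<or> (\<exists>Ck Ysk Us' cp C1k Ys1k C0hk Qh. Ys ! k = TN Ck Ysk
               \<and> rai (TN (mode_prod Ck 0 (Rs ! k)) Ysk) (reduced_F F C0 Ys k (Qs ! k)) t0 t1
                     Us' cp (TN C1k Ys1k) C0hk
               \<and> onb_of Qh (hcat (tr (matz 0 C1k)) (tr (matz 0 C0hk)))
               \<and> Xhs ! k = TN (tenz 0 (ncols Qh # tl (fst C1k)) (tr Qh)) Ys1k));
     Uhs = map Ubasis Xhs;
     Mhs = map (\<lambda>k. mmul (tr (Uhs ! k)) (Ubasis (Ys ! k))) [0..<length Ys];
     C0h = mprods C0 Mhs;
     ode_sol (\<lambda>t C. mprods (F t (mprods C Uhs)) (map tr Uhs)) t0 t1 C0h c \<rbrakk>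
   \<Longrightarrow> rai (TN C0 Ys) F t0 t1 Uhs c (TN (c t1) Xhs) C0h"

end

theory Submission
  imports Defs
begin

(* First, the augmented bases reproduce the starting value: C0h x_i Uh_i = Y0. Since
   mat_i(C0) = S_i Q_i^T, the product C0 x_i V depends on V only through V S_i, and the
   range of Uh_i contains that of U_i S_i: for a leaf by construction, for an inner node
   because, by induction, the recursive call reproduces the child's starting value and
   the new root connection tensor is augmented by mat_0 of the child's C0h. The augmented
   bases are orthonormal by construction.
   Second, the connection-tensor equation is the Galerkin projection of the gradient flow
   onto {C x_i Uh_i}; by adjointness of mode products,
   d/dt E(Yh(t)) = -|grad E(Yh(t)) x_i Uh_i^T|^2.
   Third, the mean value theorem bounds the decrease of E(Yh(t)) over [t0, t1] below by
   alpha^2 h. *)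

lemma fst_mk [simp]: "fst (mk S f) = S"
  by (simp add: mk_def)

lemma snd_mk: "snd (mk S f) ix = (if ix \<in> idx S then f ix else 0)"
  by (simp add: mk_def)

lemma wf_mk [simp]: "wf_t (mk S f)"
  by (simp add: wf_t_def mk_def)

lemma idx_Nil [simp]: "idx [] = {[]}"
  by (auto simp: idx_def)

lemma Cons_in_idx_Cons [simp]: "(j # js) \<in> idx (d # ds) \<longleftrightarrow> j < d \<and> js \<in> idx ds"
  by (auto simp: idx_def nth_Cons split: nat.splits)

lemma Nil_notin_idx_Cons [simp]: "[] \<notin> idx (d # ds)"
  by (auto simp: idx_def)

lemma idx_nth_less: "ix \<in> idx S \<Longrightarrow> k < length S \<Longrightarrow> ix ! k < S ! k"
  by (simp add: idx_def)

lemma idx_ConsE: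
  assumes "ix \<in> idx (d # ds)"
  obtains a t where "ix = a # t" "a < d" "t \<in> idx ds"
  using assms by (cases ix) auto

lemma length_2_conv: "length xs = 2 \<Longrightarrow> xs = [xs ! 0, xs ! 1]"
  by (cases xs; cases "tl xs") auto

lemma pair_in_idx_pair [simp]: "[a, b] \<in> idx [m, n] \<longleftrightarrow> a < m \<and> b < n"
  by simp

lemma idx_pairE:
  assumes "ix \<in> idx [m, n]"
  obtains a b where "ix = [a, b]" "a < m" "b < n"
proof -
  have "length ix = 2" using assms by (simp add: idx_def)
  then have "ix = [ix ! 0, ix ! 1]" by (rule length_2_conv)
  with assms that show ?thesis by (metis pair_in_idx_pair)
qed

lemma tensor_eqI:
  assumes "fst A = fst B" "wf_t A" "wf_t B" "\<And>ix. ix \<in> idx (fst A) \<Longrightarrow> snd A ix = snd B ix"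
  shows "A = B"
proof -
  have "snd A ix = snd B ix" for ix
    using assms by (cases "ix \<in> idx (fst A)") (auto simp: wf_t_def)
  then show ?thesis using assms(1) by (simp add: prod_eq_iff fun_eq_iff)
qed

lemma idx_list_update: "ix \<in> idx S \<Longrightarrow> a < n \<Longrightarrow> ix[k := a] \<in> idx (S[k := n])"
  unfolding idx_def apply clarsimp
  subgoal for j by (cases "j = k") auto
  done

lemma idx_list_update_back:
  "ix \<in> idx (S[k := m]) \<Longrightarrow> k < length S \<Longrightarrow> a < S ! k \<Longrightarrow> ix[k := a] \<in> idx S"
  unfolding idx_def by (auto simp: nth_list_update)

lemma sum_idx_split_mode:
  assumes k: "k < length S"
  shows "(\<Sum>ix\<in>idx S. f ix) = (\<Sum>b\<in>idx (S[k := 1]). \<Sum>a<S ! k. f (b[k := a]))"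
proof -
  have "(\<Sum>ix\<in>idx S. f ix) = (\<Sum>p\<in>idx (S[k := 1]) \<times> {..<S ! k}. f ((fst p)[k := snd p]))"
    apply (rule sum.reindex_bij_witness[where i="\<lambda>p. (fst p)[k := snd p]" and j="\<lambda>ix. (ix[k := 0], ix ! k)"])
    using k apply (auto simp: idx_def nth_list_update)
    subgoal for a b by (drule spec[of _ k]) (simp, metis list_update_id)
    subgoal for a b ka by (drule spec[of _ ka]) simp
    done
  then show ?thesis by (simp add: sum.cartesian_product case_prod_beta)
qed

lemma fst_mode_prod [simp]: "fst (mode_prod A i B) = (fst A)[i := fst B ! 0]"
  by (simp add: mode_prod_def)

lemma snd_mode_prod: "snd (mode_prod A i B) ix = (if ix \<in> idx ((fst A)[i := fst B ! 0])
   then \<Sum>j<fst A ! i. snd B [ix ! i, j] * snd A (ix[i := j]) else 0)"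
  by (simp add: mode_prod_def snd_mk)

lemma wf_mode_prod [simp]: "wf_t (mode_prod A i B)"
  by (simp add: mode_prod_def)

lemma mode_prod_commute:
  assumes ij: "i \<noteq> j" "i < length (fst A)" "j < length (fst A)"
  shows "mode_prod (mode_prod A i B) j C = mode_prod (mode_prod A j C) i B"
proof (rule tensor_eqI)
  fix ix assume ix: "ix \<in> idx (fst (mode_prod (mode_prod A i B) j C))"
  let ?S = "fst A"
  have in1: "ix[j := b] \<in> idx (?S[i := fst B ! 0])" if "b < ?S ! j" for b
    using ix ij that by (auto simp: idx_def nth_list_update)
  have in2: "ix[i := a] \<in> idx (?S[j := fst C ! 0])" if "a < ?S ! i" for a
    using ix ij that by (auto simp: idx_def nth_list_update)
  have ix': "ix \<in> idx (?S[j := fst C ! 0, i := fst B ! 0])"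
    using ix ij by (simp add: list_update_swap)
  have "snd (mode_prod (mode_prod A i B) j C) ix =
     (\<Sum>b<?S ! j. \<Sum>a<?S ! i. snd C [ix ! j, b] * (snd B [ix ! i, a] * snd A (ix[j := b, i := a])))"
    using ix ij in1 by (simp add: snd_mode_prod sum_distrib_left nth_list_update)
  also have "\<dots> = (\<Sum>a<?S ! i. \<Sum>b<?S ! j. snd B [ix ! i, a] * (snd C [ix ! j, b] * snd A (ix[i := a, j := b])))"
    by (subst sum.swap) (simp add: list_update_swap[OF ij(1)[symmetric]] ac_simps)
  also have "\<dots> = snd (mode_prod (mode_prod A j C) i B) ix"
    using ix' ij in2 by (simp add: snd_mode_prod sum_distrib_left nth_list_update)
  finally show "snd (mode_prod (mode_prod A i B) j C) ix = snd (mode_prod (mode_prod A j C) i B) ix" .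
qed (use ij in \<open>simp_all add: list_update_swap\<close>)

lemma mode_prod_mode_prod:
  assumes i: "i < length (fst A)" and B: "length (fst B) = 2" "fst B ! 1 = fst A ! i"
  shows "mode_prod (mode_prod A i B) i C = mode_prod A i (mmul C B)"
proof (rule tensor_eqI)
  fix ix assume ix: "ix \<in> idx (fst (mode_prod (mode_prod A i B) i C))"
  let ?S = "fst A"
  have fB: "fst B = [fst B ! 0, fst B ! 1]" using B length_2_conv by blast
  have in1: "ix[i := b] \<in> idx (?S[i := fst B ! 0])" if "b < fst B ! 0" for b
    using ix i that by (auto simp: idx_def nth_list_update)
  have "ix ! i < fst C ! 0" using ix i by (auto simp: idx_def)
  then have in2: "[ix ! i, a] \<in> idx ((fst B)[0 := fst C ! 0])" if "a < ?S ! i" for a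
    using B that by (subst fB) simp
  have "length ix = length ?S" using ix by (simp add: idx_def)
  then have "snd (mode_prod (mode_prod A i B) i C) ix =
      (\<Sum>b<fst B ! 0. \<Sum>a<?S ! i. snd C [ix ! i, b] * (snd B [b, a] * snd A (ix[i := a])))"
    using ix i in1 by (simp add: snd_mode_prod sum_distrib_left)
  also have "\<dots> = (\<Sum>a<?S ! i. \<Sum>b<fst B ! 0. snd C [ix ! i, b] * snd B [b, a] * snd A (ix[i := a]))"
    by (subst sum.swap) (simp add: ac_simps)
  also have "\<dots> = snd (mode_prod A i (mmul C B)) ix"
    using ix i in2 B by (simp add: snd_mode_prod mmul_def sum_distrib_right)
  finally show "snd (mode_prod (mode_prod A i B) i C) ix = snd (mode_prod A i (mmul C B)) ix" .
qed (use i B in \<open>simp_all add: mmul_def\<close>)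

lemma fst_eye [simp]: "fst (eye n) = [n, n]"
  by (simp add: eye_def)

lemma snd_mode_prod_eye:
  assumes "ix \<in> idx (fst A)" "i < length (fst A)"
  shows "snd (mode_prod A i (eye (fst A ! i))) ix = snd A ix"
proof -
  have lt: "ix ! i < fst A ! i" using assms by (simp add: idx_def)
  have "snd (mode_prod A i (eye (fst A ! i))) ix =
        (\<Sum>j<fst A ! i. (if ix ! i = j then 1 else 0) * snd A (ix[i := j]))"
    using assms lt by (simp add: snd_mode_prod eye_def snd_mk)
  also have "\<dots> = (\<Sum>j<fst A ! i. if ix ! i = j then snd A (ix[i := j]) else 0)"
    by (rule sum.cong) auto
  also have "\<dots> = snd A ix" using lt by simp
  finally show ?thesis .
qed

lemma mode_prod_eye: "wf_t A \<Longrightarrow> i < length (fst A) \<Longrightarrow> mode_prod A i (eye (fst A ! i)) = A"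
  by (intro tensor_eqI) (simp_all add: snd_mode_prod_eye)

lemma fst_tr [simp]: "fst (tr M) = [ncols M, nrows M]"
  by (simp add: tr_def)

lemma snd_tr [simp]: "snd (tr M) [a, b] = (if a < ncols M \<and> b < nrows M then snd M [b, a] else 0)"
  by (simp add: tr_def snd_mk)

lemma wf_tr [simp]: "wf_t (tr M)"
  by (simp add: tr_def)

lemma is_mat_tr [simp]: "is_mat (tr M)"
  by (simp add: is_mat_def)

lemma nrows_tr [simp]: "nrows (tr M) = ncols M"
  by (simp add: nrows_def)

lemma ncols_tr [simp]: "ncols (tr M) = nrows M"
  by (simp add: ncols_def)

lemma is_mat_shape: "is_mat M \<Longrightarrow> fst M = [nrows M, ncols M]"
  unfolding is_mat_def nrows_def ncols_def using length_2_conv by blast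

lemma tr_tr: "is_mat M \<Longrightarrow> tr (tr M) = M"
proof (rule tensor_eqI)
  assume M: "is_mat M"
  then show "fst (tr (tr M)) = fst M" "wf_t M" by (simp_all add: is_mat_shape is_mat_def)
  fix ix assume "ix \<in> idx (fst (tr (tr M)))"
  then show "snd (tr (tr M)) ix = snd M ix"
    by (auto elim: idx_pairE)
qed simp

lemma fst_mmul [simp]: "fst (mmul B A) = (fst A)[0 := fst B ! 0]"
  by (simp add: mmul_def)

lemma wf_mmul [simp]: "wf_t (mmul B A)"
  by (simp add: mmul_def)

lemma snd_mmul: "length (fst A) = 2 \<Longrightarrow> snd (mmul B A) [a, b] =
   (if a < fst B ! 0 \<and> b < fst A ! 1 then \<Sum>j<fst A ! 0. snd B [a, j] * snd A [j, b] else 0)"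
proof -
  assume "length (fst A) = 2"
  then obtain p q where "fst A = [p, q]" using length_2_conv by blast
  then show ?thesis by (simp add: mmul_def snd_mode_prod)
qed

lemma mmul_eye: "wf_t W \<Longrightarrow> fst W \<noteq> [] \<Longrightarrow> mmul (eye (fst W ! 0)) W = W"
  by (simp add: mmul_def mode_prod_eye)

lemma mmul_assoc:
  assumes "length (fst B) = 2" "ncols B = fst C ! 0" "fst C \<noteq> []"
  shows "mmul A (mmul B C) = mmul (mmul A B) C"
  using assms mode_prod_mode_prod[of 0 C B A] by (simp add: mmul_def ncols_def)

lemma prod_list_tail_pos: "(k::nat) < prod_list (d # ds) \<Longrightarrow> 0 < prod_list ds"
  by (rule gr0I) simp

lemma delin_in_idx: "k < prod_list ds \<Longrightarrow> delin ds k \<in> idx ds"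
proof (induction ds arbitrary: k)
  case (Cons d ds)
  have P: "0 < prod_list ds" using Cons.prems by (rule prod_list_tail_pos)
  have "k div prod_list ds < d" using Cons.prems by (simp add: less_mult_imp_div_less)
  then show ?case using Cons P by simp
qed simp

lemma lin_delin: "k < prod_list ds \<Longrightarrow> lin ds (delin ds k) = k"
proof (induction ds arbitrary: k)
  case (Cons d ds)
  have "0 < prod_list ds" using Cons.prems by (rule prod_list_tail_pos)
  then show ?case using Cons by simp
qed simp

lemma lin_less: "js \<in> idx ds \<Longrightarrow> lin ds js < prod_list ds"
proof (induction ds arbitrary: js)
  case (Cons d ds)
  then obtain j js' where js: "js = j # js'" "j < d" "js' \<in> idx ds"
    by (auto elim: idx_ConsE)
  have "lin ds js' < prod_list ds" using Cons js by blast
  then have "j * prod_list ds + lin ds js' < Suc j * prod_list ds" by simp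
  also have "\<dots> \<le> d * prod_list ds" using js(2) by (intro mult_right_mono) auto
  finally show ?case using js by simp
qed simp

lemma delin_lin: "js \<in> idx ds \<Longrightarrow> delin ds (lin ds js) = js"
proof (induction ds arbitrary: js)
  case (Cons d ds)
  then obtain j js' where js: "js = j # js'" "j < d" "js' \<in> idx ds"
    by (auto elim: idx_ConsE)
  have "lin ds js' < prod_list ds" using js lin_less by blast
  then have "(j * prod_list ds + lin ds js') div prod_list ds = j"
    "(j * prod_list ds + lin ds js') mod prod_list ds = lin ds js'" by simp_all
  then show ?case using Cons js by simp
qed (simp add: idx_def)

lemma bij_betw_delin: "bij_betw (delin ds) {..<prod_list ds} (idx ds)"
  by (rule bij_betw_byWitness[where f'="lin ds"]) (auto simp: lin_delin delin_lin delin_in_idx lin_less)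

lemma remove_nth_0 [simp]: "remove_nth 0 xs = tl xs"
  by (simp add: remove_nth_def drop_Suc)

lemma insert_nth_0 [simp]: "insert_nth 0 x xs = x # xs"
  by (simp add: insert_nth_def)

lemma insert_remove_nth: "i < length xs \<Longrightarrow> insert_nth i j (remove_nth i xs) = xs[i := j]"
  by (simp add: insert_nth_def remove_nth_def upd_conv_take_nth_drop min_def)

lemma remove_nth_list_update [simp]: "remove_nth i (xs[i := x]) = remove_nth i xs"
  by (simp add: remove_nth_def)

lemma remove_nth_in_idx:
  "ix \<in> idx S \<Longrightarrow> i < length S \<Longrightarrow> remove_nth i ix \<in> idx (remove_nth i S)"
  unfolding idx_def remove_nth_def by (auto simp: nth_append min_def)

lemma remove_nth_in_idx_update:
  "ix \<in> idx (S[i := m]) \<Longrightarrow> i < length S \<Longrightarrow> remove_nth i ix \<in> idx (remove_nth i S)"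
  using remove_nth_in_idx[of ix "S[i := m]" i] by simp

lemma fst_matz [simp]: "fst (matz i A) = [fst A ! i, prod_list (remove_nth i (fst A))]"
  by (simp add: matz_def)

lemma wf_matz [simp]: "wf_t (matz i A)"
  by (simp add: matz_def)

lemma is_mat_matz [simp]: "is_mat (matz i A)"
  by (simp add: is_mat_def)

lemma snd_matz: "snd (matz i A) [a, c] = (if a < fst A ! i \<and> c < prod_list (remove_nth i (fst A))
   then snd A (insert_nth i a (delin (remove_nth i (fst A)) c)) else 0)"
  by (simp add: matz_def snd_mk)

lemma snd_eq_matz_entry:
  assumes "i < length (fst A)" "ix \<in> idx ((fst A)[i := m])" "j < fst A ! i"
  shows "snd A (ix[i := j]) = snd (matz i A) [j, lin (remove_nth i (fst A)) (remove_nth i ix)]"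
proof -
  have "remove_nth i ix \<in> idx (remove_nth i (fst A))" using assms remove_nth_in_idx_update by blast
  moreover have "i < length ix" using assms by (simp add: idx_def)
  ultimately show ?thesis using assms by (simp add: snd_matz lin_less delin_lin insert_remove_nth)
qed

lemma fst_tenz [simp]: "fst (tenz i S M) = S"
  by (simp add: tenz_def)

lemma snd_tenz: "snd (tenz i S M) ix =
   (if ix \<in> idx S then snd M [ix ! i, lin (remove_nth i S) (remove_nth i ix)] else 0)"
  by (simp add: tenz_def snd_mk)

lemma matz_0_mat: "is_mat A \<Longrightarrow> matz 0 A = A"
proof (rule tensor_eqI)
  assume A: "is_mat A"
  then obtain r c where "fst A = [r, c]" using is_mat_shape by blast
  then show "fst (matz 0 A) = fst A" by simp
  show "wf_t A" using A by (simp add: is_mat_def)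
  fix ix assume "ix \<in> idx (fst (matz 0 A))"
  then have "ix \<in> idx [fst A ! 0, prod_list (tl (fst A))]" by simp
  then show "snd (matz 0 A) ix = snd A ix"
    by (rule idx_pairE) (simp add: snd_matz is_mat_shape[OF A])
qed simp

lemma matz_0_tenz_0:
  assumes "fst M = [S ! 0, prod_list (tl S)]" "wf_t M" "S \<noteq> []"
  shows "matz 0 (tenz 0 S M) = M"
proof (rule tensor_eqI)
  obtain s0 Ss where S: "S = s0 # Ss" using assms by (cases S) auto
  fix ix assume "ix \<in> idx (fst (matz 0 (tenz 0 S M)))"
  then have "ix \<in> idx [s0, prod_list Ss]" using S by simp
  then show "snd (matz 0 (tenz 0 S M)) ix = snd M ix"
    by (rule idx_pairE) (simp add: snd_matz snd_tenz S delin_in_idx lin_delin)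
qed (use assms in simp_all)

lemma tensor_eq_tenz_mode_prod:
  assumes T: "wf_t T" "fst T \<noteq> []" and fac: "tr (matz 0 T) = mmul Qh W"
    and Qh: "fst Qh = [prod_list (tl (fst T)), q]" and W: "fst W = [q, fst T ! 0]"
  shows "T = mode_prod (tenz 0 (q # tl (fst T)) (tr Qh)) 0 (tr W)"
proof (rule tensor_eqI)
  obtain s0 Ss where S: "fst T = s0 # Ss" using assms by (cases "fst T") auto
  then show "fst T = fst (mode_prod (tenz 0 (q # tl (fst T)) (tr Qh)) 0 (tr W))"
    using W by (simp add: ncols_def)
  fix ix assume "ix \<in> idx (fst T)"
  then obtain a t where ix: "ix = a # t" "a < s0" "t \<in> idx Ss" using S by (auto elim: idx_ConsE)
  have l: "lin Ss t < prod_list Ss" using ix lin_less by blast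
  have "snd T ix = snd (tr (matz 0 T)) [lin Ss t, a]"
    using ix S l by (simp add: snd_matz delin_lin nrows_def ncols_def)
  also have "\<dots> = (\<Sum>j<q. snd Qh [lin Ss t, j] * snd W [j, a])"
    unfolding fac using W Qh S ix l by (simp add: snd_mmul)
  also have "\<dots> = snd (mode_prod (tenz 0 (q # tl (fst T)) (tr Qh)) 0 (tr W)) ix"
    using W Qh S ix l
    by (auto simp: snd_mode_prod snd_tenz nrows_def ncols_def mult.commute intro!: sum.cong)
  finally show "snd T ix = snd (mode_prod (tenz 0 (q # tl (fst T)) (tr Qh)) 0 (tr W)) ix" .
qed (use T in simp_all)

lemma tr_matz_0_mode_prod_0:
  assumes X: "fst X \<noteq> []" and B: "length (fst B) = 2" "fst B ! 1 = fst X ! 0"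
  shows "tr (matz 0 (mode_prod X 0 B)) = mmul (tr (matz 0 X)) (tr B)"
proof (rule tensor_eqI)
  obtain s0 Ss where S: "fst X = s0 # Ss" using assms by (cases "fst X") auto
  obtain b0 b1 where fB: "fst B = [b0, b1]" using B length_2_conv by blast
  show "fst (tr (matz 0 (mode_prod X 0 B))) = fst (mmul (tr (matz 0 X)) (tr B))"
    using S fB B by (simp add: nrows_def ncols_def)
  fix ix assume "ix \<in> idx (fst (tr (matz 0 (mode_prod X 0 B))))"
  then have "ix \<in> idx [prod_list Ss, b0]" using S fB by (simp add: nrows_def ncols_def)
  then obtain c a where ix: "ix = [c, a]" "c < prod_list Ss" "a < b0" by (rule idx_pairE)
  then have "delin Ss c \<in> idx Ss" using delin_in_idx by blast
  then show "snd (tr (matz 0 (mode_prod X 0 B))) ix = snd (mmul (tr (matz 0 X)) (tr B)) ix"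
    using ix S fB B by (simp add: snd_mmul nrows_def ncols_def snd_matz snd_mode_prod mult.commute)
qed simp_all

lemma is_mat_Ubasis [simp]: "is_mat (Ubasis Y)"
  by (simp add: Ubasis_def)

lemma fst_Ubasis: "fst (Ubasis Y) = [prod_list (tl (fst (ttnX Y))), fst (ttnX Y) ! 0]"
  by (simp add: Ubasis_def nrows_def ncols_def)

lemma Ubasis_TL: "is_mat U \<Longrightarrow> Ubasis (TL U) = U"
  by (simp add: Ubasis_def matz_0_mat tr_tr)

lemma ttnX_TN: "ttnX (TN C Ys) = mprods C (map Ubasis Ys)"
  by (simp add: Ubasis_def[abs_def])

lemma tinner_cong:
  "fst A = fst A' \<Longrightarrow> (\<And>ix. ix \<in> idx (fst A) \<Longrightarrow> snd A ix = snd A' ix) \<Longrightarrow>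
   (\<And>ix. ix \<in> idx (fst A) \<Longrightarrow> snd B ix = snd B' ix) \<Longrightarrow> tinner A B = tinner A' B'"
  by (auto simp: tinner_def intro!: sum.cong)

lemma tinner_mode_prod_adjoint:
  assumes k: "k < length (fst D)" and G: "fst G = fst (mode_prod D k U)"
    and U: "length (fst U) = 2" "ncols U = fst D ! k"
  shows "tinner G (mode_prod D k U) = tinner (mode_prod G k (tr U)) D"
proof -
  let ?S = "fst D" let ?n = "fst U ! 0" let ?r = "fst D ! k"
  have GS: "fst G = ?S[k := ?n]" using G by simp
  have len_b: "length b = length ?S" if "b \<in> idx (?S[k := 1])" for b
    using that by (simp add: idx_def)
  have "tinner G (mode_prod D k U) =
      (\<Sum>b\<in>idx (?S[k := 1]). \<Sum>a<?n. snd G (b[k := a]) * snd (mode_prod D k U) (b[k := a]))"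
    unfolding tinner_def GS using k by (subst sum_idx_split_mode[of k]) simp_all
  also have "\<dots> = (\<Sum>b\<in>idx (?S[k := 1]). \<Sum>a<?n. \<Sum>j<?r.
      snd G (b[k := a]) * (snd U [a, j] * snd D (b[k := j])))"
  proof (intro sum.cong refl)
    fix b a assume b: "b \<in> idx (?S[k := 1])" and a: "a \<in> {..<?n}"
    have "b[k := a] \<in> idx (?S[k := ?n])" using b a idx_list_update[of b "?S[k := 1]" a ?n k] by simp
    then show "snd G (b[k := a]) * snd (mode_prod D k U) (b[k := a]) =
        (\<Sum>j<?r. snd G (b[k := a]) * (snd U [a, j] * snd D (b[k := j])))"
      using k len_b[OF b] by (simp add: snd_mode_prod sum_distrib_left)
  qed
  also have "\<dots> = (\<Sum>b\<in>idx (?S[k := 1]). \<Sum>j<?r. \<Sum>a<?n.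
      snd U [a, j] * snd G (b[k := a]) * snd D (b[k := j]))"
    by (rule sum.cong[OF refl], subst sum.swap) (simp add: ac_simps)
  also have "\<dots> = (\<Sum>b\<in>idx (?S[k := 1]). \<Sum>j<?r.
      snd (mode_prod G k (tr U)) (b[k := j]) * snd D (b[k := j]))"
  proof (intro sum.cong refl)
    fix b j assume b: "b \<in> idx (?S[k := 1])" and j: "j \<in> {..<?r}"
    have "b[k := j] \<in> idx (?S[k := ?r])" using b j idx_list_update[of b "?S[k := 1]" j ?r k] by simp
    then show "(\<Sum>a<?n. snd U [a, j] * snd G (b[k := a]) * snd D (b[k := j])) =
        snd (mode_prod G k (tr U)) (b[k := j]) * snd D (b[k := j])"
      using k j GS U len_b[OF b] length_2_conv[OF U(1)]
      by (simp add: snd_mode_prod sum_distrib_right nrows_def ncols_def)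
  qed
  also have "\<dots> = (\<Sum>ix\<in>idx ?S. snd (mode_prod G k (tr U)) ix * snd D ix)"
    using k by (subst sum_idx_split_mode[of k ?S]) simp_all
  also have "\<dots> = tinner (mode_prod G k (tr U)) D"
    using GS U k by (simp add: tinner_def nrows_def ncols_def)
  finally show ?thesis .
qed

lemma tinner_mode_prod_orthcols:
  assumes V: "orthcols V" and k: "k < length (fst A)" and B: "fst B = fst A"
    and n: "ncols V = fst A ! k"
  shows "tinner (mode_prod A k V) (mode_prod B k V) = tinner A B"
proof -
  have lV: "length (fst V) = 2" using V by (simp add: orthcols_def is_mat_def)
  have "tinner (mode_prod A k V) (mode_prod B k V) = tinner (mode_prod (mode_prod A k V) k (tr V)) B"
    using k B lV n by (intro tinner_mode_prod_adjoint) simp_all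
  also have "\<dots> = tinner (mode_prod A k (eye (fst A ! k))) B"
    using k lV n V by (simp add: mode_prod_mode_prod ncols_def orthcols_def)
  also have "\<dots> = tinner A B"
    using k by (intro tinner_cong) (simp_all add: snd_mode_prod_eye)
  finally show ?thesis .
qed

lemma length_fst_mprods_from [simp]: "length (fst (mprods_from j A Us)) = length (fst A)"
  by (induction Us arbitrary: j A) simp_all

lemma fst_mprods_from_cong: "fst A = fst B \<Longrightarrow> fst (mprods_from j A Us) = fst (mprods_from j B Us)"
  by (induction Us arbitrary: j A B) simp_all

lemma wf_mprods_from [simp]: "wf_t A \<Longrightarrow> wf_t (mprods_from j A Us)"
  by (induction Us arbitrary: j A) simp_all

lemma nth_fst_mprods_from:
  "j + length Us \<le> length (fst A) \<Longrightarrow> i < length (fst A) \<Longrightarrow>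
   fst (mprods_from j A Us) ! i =
     (if j \<le> i \<and> i < j + length Us then fst (Us ! (i - j)) ! 0 else fst A ! i)"
proof (induction Us arbitrary: j A)
  case (Cons U Us)
  have "fst (mprods_from (Suc j) (mode_prod A j U) Us) ! i =
     (if Suc j \<le> i \<and> i < Suc j + length Us then fst (Us ! (i - Suc j)) ! 0
      else (fst A)[j := fst U ! 0] ! i)"
    using Cons by (intro Cons.IH[THEN trans]) simp_all
  then show ?case using Cons.prems
    by (cases "i = j") (auto simp: nth_list_update nth_Cons' Suc_diff_Suc)
qed simp

lemma fst_mprods_from_back:
  assumes "j + length Us \<le> length (fst A)" "\<forall>k<length Us. ncols (Us ! k) = fst A ! (j + k)"
  shows "fst (mprods_from j (mprods_from j A Us) (map tr Us)) = fst A"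
proof (rule nth_equalityI)
  show "length (fst (mprods_from j (mprods_from j A Us) (map tr Us))) = length (fst A)" by simp
  fix i assume i: "i < length (fst (mprods_from j (mprods_from j A Us) (map tr Us)))"
  then have i': "i < length (fst A)" by simp
  have a1: "fst (mprods_from j (mprods_from j A Us) (map tr Us)) ! i =
     (if j \<le> i \<and> i < j + length Us then fst (map tr Us ! (i - j)) ! 0 else fst (mprods_from j A Us) ! i)"
    using nth_fst_mprods_from[of j "map tr Us" "mprods_from j A Us" i] assms i' by simp
  have a2: "fst (mprods_from j A Us) ! i = (if j \<le> i \<and> i < j + length Us then fst (Us ! (i - j)) ! 0 else fst A ! i)"
    using nth_fst_mprods_from[of j Us A i] assms i' by simp
  show "fst (mprods_from j (mprods_from j A Us) (map tr Us)) ! i = fst A ! i"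
  proof (cases "j \<le> i \<and> i < j + length Us")
    case True
    then have "i - j < length Us" by linarith
    then show ?thesis using a1 True assms(2)[rule_format, of "i - j"] by (simp add: ncols_def)
  next
    case False then show ?thesis using a1 a2 by (simp only: if_not_P[OF False] if_False)
  qed
qed

lemma mprods_from_mode_prod_commute:
  "k < j \<Longrightarrow> j + length Us \<le> length (fst A) \<Longrightarrow>
   mprods_from j (mode_prod A k B) Us = mode_prod (mprods_from j A Us) k B"
proof (induction Us arbitrary: j A)
  case (Cons U Us)
  have "mode_prod (mode_prod A k B) j U = mode_prod (mode_prod A j U) k B"
    using Cons.prems by (intro mode_prod_commute) auto
  then show ?case using Cons by simp
qed simp

lemma mprods_from_mprods_from:
  "length Ms = length Us \<Longrightarrow> j + length Us \<le> length (fst A) \<Longrightarrow>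
   (\<forall>i<length Ms. length (fst (Ms ! i)) = 2 \<and> fst (Ms ! i) ! 1 = fst A ! (j + i)) \<Longrightarrow>
   mprods_from j (mprods_from j A Ms) Us = mprods_from j A (map (\<lambda>(U, M). mmul U M) (zip Us Ms))"
proof (induction Ms arbitrary: Us j A)
  case Nil then show ?case by simp
next
  case (Cons M Ms)
  then obtain U Us' where Us: "Us = U # Us'" by (cases Us) auto
  have M: "length (fst M) = 2" "fst M ! 1 = fst A ! j" using Cons.prems(3) by (metis length_greater_0_conv list.discI nth_Cons_0 add_0_right)+
  have "mprods_from j (mprods_from j A (M # Ms)) Us =
        mprods_from (Suc j) (mode_prod (mprods_from (Suc j) (mode_prod A j M) Ms) j U) Us'"
    using Us by simp
  also have "mode_prod (mprods_from (Suc j) (mode_prod A j M) Ms) j U =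
      mprods_from (Suc j) (mode_prod (mode_prod A j M) j U) Ms"
    using Cons.prems Us by (intro mprods_from_mode_prod_commute[symmetric]) auto
  also have "mode_prod (mode_prod A j M) j U = mode_prod A j (mmul U M)"
    using Cons.prems Us M by (intro mode_prod_mode_prod) auto
  also have "mprods_from (Suc j) (mprods_from (Suc j) (mode_prod A j (mmul U M)) Ms) Us' =
     mprods_from (Suc j) (mode_prod A j (mmul U M)) (map (\<lambda>(U, M). mmul U M) (zip Us' Ms))"
  proof (rule Cons.IH)
    show "length Ms = length Us'" using Cons.prems Us by simp
    show "Suc j + length Us' \<le> length (fst (mode_prod A j (mmul U M)))" using Cons.prems Us by simp
    show "\<forall>i<length Ms. length (fst (Ms ! i)) = 2 \<and> fst (Ms ! i) ! 1 = fst (mode_prod A j (mmul U M)) ! (Suc j + i)"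
    proof (intro allI impI)
      fix i assume i: "i < length Ms"
      then have "length (fst (Ms ! i)) = 2 \<and> fst (Ms ! i) ! 1 = fst A ! (j + Suc i)"
        using Cons.prems(3) by (metis Suc_less_eq length_Cons nth_Cons_Suc)
      then show "length (fst (Ms ! i)) = 2 \<and> fst (Ms ! i) ! 1 = fst (mode_prod A j (mmul U M)) ! (Suc j + i)"
        by simp
    qed
  qed
  finally show ?case using Us by simp
qed

lemma mprods_from_cong:
  "length Vs = length Us \<Longrightarrow> j + length Us \<le> length (fst A) \<Longrightarrow>
   (\<forall>k<length Us. mode_prod A (j + k) (Vs ! k) = mode_prod A (j + k) (Us ! k)) \<Longrightarrow>
   mprods_from j A Vs = mprods_from j A Us"
proof (induction Vs arbitrary: Us j A)
  case Nil then show ?case by simp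
next
  case (Cons V Vs)
  then obtain U Us' where Us: "Us = U # Us'" by (cases Us) auto
  have e0: "mode_prod A j V = mode_prod A j U" using Cons.prems(3) Us by (metis add_0_right nth_Cons_0 zero_less_Suc length_Cons)
  have "mprods_from (Suc j) (mode_prod A j U) Vs = mprods_from (Suc j) (mode_prod A j U) Us'"
  proof (rule Cons.IH)
    show "length Vs = length Us'" using Cons.prems Us by simp
    show "Suc j + length Us' \<le> length (fst (mode_prod A j U))" using Cons.prems Us by simp
    show "\<forall>k<length Us'. mode_prod (mode_prod A j U) (Suc j + k) (Vs ! k) = mode_prod (mode_prod A j U) (Suc j + k) (Us' ! k)"
    proof (intro allI impI)
      fix k assume k: "k < length Us'"
      have "mode_prod A (j + Suc k) (Vs ! k) = mode_prod A (j + Suc k) (Us' ! k)"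
        using Cons.prems(3) Us k by (metis Suc_less_eq length_Cons nth_Cons_Suc)
      moreover have "mode_prod (mode_prod A j U) (Suc j + k) W = mode_prod (mode_prod A (Suc j + k) W) j U" for W
        using Cons.prems Us k by (intro mode_prod_commute) auto
      ultimately show "mode_prod (mode_prod A j U) (Suc j + k) (Vs ! k) = mode_prod (mode_prod A j U) (Suc j + k) (Us' ! k)"
        by simp
    qed
  qed
  then show ?case using Us e0 by simp
qed

lemma tinner_mprods_from_adjoint:
  "j + length Us \<le> length (fst D) \<Longrightarrow>
   (\<forall>k<length Us. length (fst (Us ! k)) = 2 \<and> ncols (Us ! k) = fst D ! (j + k)) \<Longrightarrow>
   fst G = fst (mprods_from j D Us) \<Longrightarrow>
   tinner G (mprods_from j D Us) = tinner (mprods_from j G (map tr Us)) D"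
proof (induction Us arbitrary: j D G)
  case Nil then show ?case by simp
next
  case (Cons U Us)
  have U: "length (fst U) = 2" "ncols U = fst D ! j" using Cons.prems(2) by (metis add_0_right length_Cons nth_Cons_0 zero_less_Suc)+
  let ?G' = "mprods_from (Suc j) G (map tr Us)"
  have lG: "length (fst G) = length (fst D)" using Cons.prems(3) by simp
  have shape: "fst ?G' = fst (mode_prod D j U)"
  proof (rule nth_equalityI)
    show "length (fst ?G') = length (fst (mode_prod D j U))" using lG by simp
    fix i assume i: "i < length (fst ?G')"
    then have i': "i < length (fst D)" using lG by simp
    have g1: "fst ?G' ! i = (if Suc j \<le> i \<and> i < Suc j + length Us then fst (map tr Us ! (i - Suc j)) ! 0 else fst G ! i)"
      using nth_fst_mprods_from[of "Suc j" "map tr Us" G i] Cons.prems lG i' by simp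
    have g2: "fst G ! i = (if j \<le> i \<and> i < j + length (U # Us) then fst ((U # Us) ! (i - j)) ! 0 else fst D ! i)"
      unfolding Cons.prems(3) using Cons.prems i' by (intro nth_fst_mprods_from) auto
    show "fst ?G' ! i = fst (mode_prod D j U) ! i"
    proof (cases "Suc j \<le> i \<and> i < Suc j + length Us")
      case True
      then have "ncols (Us ! (i - Suc j)) = fst D ! i"
        using Cons.prems(2)[rule_format, of "Suc (i - Suc j)"] by (simp add: less_diff_conv2)
      moreover have "i - Suc j < length Us" using True by linarith
      ultimately show ?thesis using True g1 i' by (simp add: ncols_def)
    next
      case False
      then show ?thesis using g1 g2 i' by (cases "i = j") auto
    qed
  qed
  have "tinner G (mprods_from j D (U # Us)) = tinner G (mprods_from (Suc j) (mode_prod D j U) Us)" by simp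
  also have "\<dots> = tinner ?G' (mode_prod D j U)"
  proof (rule Cons.IH)
    show "Suc j + length Us \<le> length (fst (mode_prod D j U))" using Cons.prems by simp
    show "\<forall>k<length Us. length (fst (Us ! k)) = 2 \<and> ncols (Us ! k) = fst (mode_prod D j U) ! (Suc j + k)"
    proof (intro allI impI)
      fix i assume i: "i < length Us"
      have "length (fst (Us ! i)) = 2 \<and> ncols (Us ! i) = fst D ! (j + Suc i)"
        using Cons.prems(2)[rule_format, of "Suc i"] i by simp
      then show "length (fst (Us ! i)) = 2 \<and> ncols (Us ! i) = fst (mode_prod D j U) ! (Suc j + i)" by simp
    qed
    show "fst G = fst (mprods_from (Suc j) (mode_prod D j U) Us)" using Cons.prems(3) by simp
  qed
  also have "\<dots> = tinner (mode_prod ?G' j (tr U)) D"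
    using Cons.prems U shape by (intro tinner_mode_prod_adjoint) auto
  also have "mode_prod ?G' j (tr U) = mprods_from (Suc j) (mode_prod G j (tr U)) (map tr Us)"
    using Cons.prems lG by (intro mprods_from_mode_prod_commute[symmetric]) auto
  finally show ?case by simp
qed

lemma fst_tneg [simp]: "fst (tneg A) = fst A"
  by (simp add: tneg_def)

lemma mode_prod_tneg: "k < length (fst A) \<Longrightarrow> mode_prod (tneg A) k B = tneg (mode_prod A k B)"
proof (rule tensor_eqI)
  assume k: "k < length (fst A)"
  fix ix assume ix: "ix \<in> idx (fst (mode_prod (tneg A) k B))"
  then have "ix[k := j] \<in> idx (fst A)" if "j < fst A ! k" for j
    using k that idx_list_update_back by simp
  then show "snd (mode_prod (tneg A) k B) ix = snd (tneg (mode_prod A k B)) ix"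
    using ix by (simp add: snd_mode_prod tneg_def snd_mk sum_negf[symmetric])
qed (simp_all add: tneg_def)

lemma mprods_from_tneg:
  "j + length Us \<le> length (fst A) \<Longrightarrow> mprods_from j (tneg A) Us = tneg (mprods_from j A Us)"
  by (induction Us arbitrary: j A) (simp_all add: mode_prod_tneg)

lemma tinner_tneg_right: "tinner A (tneg A) = - tinner A A"
  by (simp add: tinner_def tneg_def snd_mk sum_negf[symmetric])

lemma tinner_self_nonneg: "0 \<le> tinner A A"
  by (simp add: tinner_def sum_nonneg)

lemma tnorm_nonneg: "0 \<le> tnorm A"
  by (simp add: tnorm_def tinner_self_nonneg)

lemma tnorm_power2: "(tnorm A)\<^sup>2 = tinner A A"
  by (simp add: tnorm_def tinner_self_nonneg)

definition gram :: "tsr \<Rightarrow> tsr" where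
  "gram T = mmul (matz 0 T) (tr (matz 0 T))"

definition unit_row :: "nat \<Rightarrow> nat \<Rightarrow> tsr" where
  "unit_row a n = mk [1, n] (\<lambda>ix. if ix ! 1 = a then 1 else 0)"

definition slice :: "nat \<Rightarrow> tsr \<Rightarrow> tsr" where
  "slice a T = mode_prod T 0 (unit_row a (fst T ! 0))"

lemma fst_gram: "fst (gram T) = [fst T ! 0, fst T ! 0]"
  by (simp add: gram_def nrows_def)

lemma wf_gram [simp]: "wf_t (gram T)"
  by (simp add: gram_def)

lemma snd_slice:
  assumes S: "fst T = s0 # Ss" and a: "a < s0" and t: "t \<in> idx Ss"
  shows "snd (slice a T) (0 # t) = snd T (a # t)"
proof -
  have "snd (slice a T) (0 # t) = (\<Sum>j<s0. (if j = a then 1 else 0) * snd T (j # t))"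
    using S a t by (simp add: slice_def snd_mode_prod unit_row_def snd_mk)
  also have "\<dots> = (\<Sum>j<s0. if j = a then snd T (j # t) else 0)"
    by (rule sum.cong) auto
  also have "\<dots> = snd T (a # t)" using a by simp
  finally show ?thesis .
qed

lemma snd_gram:
  assumes S: "fst T = s0 # Ss" and a: "a < s0" and b: "b < s0"
  shows "snd (gram T) [a, b] = tinner (slice a T) (slice b T)"
proof -
  have "snd (gram T) [a, b] = (\<Sum>c<prod_list Ss. snd T (a # delin Ss c) * snd T (b # delin Ss c))"
    using S a b by (simp add: gram_def snd_mmul nrows_def ncols_def snd_matz)
  also have "\<dots> = (\<Sum>t\<in>idx Ss. snd T (a # t) * snd T (b # t))"
    by (rule sum.reindex_bij_betw[OF bij_betw_delin])
  also have "\<dots> = (\<Sum>t\<in>idx Ss. snd (slice a T) (0 # t) * snd (slice b T) (0 # t))"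
    using S a b by (simp add: snd_slice)
  also have "\<dots> = (\<Sum>ix\<in>Cons 0 ` idx Ss. snd (slice a T) ix * snd (slice b T) ix)"
    by (subst sum.reindex) (auto simp: inj_on_def)
  also have "Cons 0 ` idx Ss = idx (fst (slice a T))"
    using S by (auto simp: image_iff slice_def unit_row_def elim!: idx_ConsE)
  finally show ?thesis by (simp add: tinner_def)
qed

lemma gram_mode_prod_orthcols:
  assumes k: "1 \<le> k" "k < length (fst T)" and V: "orthcols V" "ncols V = fst T ! k"
  shows "gram (mode_prod T k V) = gram T"
proof (rule tensor_eqI)
  obtain s0 Ss where S: "fst T = s0 # Ss" using k by (cases "fst T") auto
  have S': "fst (mode_prod T k V) = s0 # (Ss[k - 1 := fst V ! 0])"
    using S k by (cases k) auto
  show "fst (gram (mode_prod T k V)) = fst (gram T)" using S S' by (simp add: fst_gram)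
  fix ix assume "ix \<in> idx (fst (gram (mode_prod T k V)))"
  then obtain a b where ix: "ix = [a, b]" "a < s0" "b < s0"
    using S' by (auto simp: fst_gram elim: idx_pairE)
  have sl: "slice c (mode_prod T k V) = mode_prod (slice c T) k V" for c
    unfolding slice_def using k S S' by (simp add: mode_prod_commute)
  have "snd (gram (mode_prod T k V)) ix = tinner (mode_prod (slice a T) k V) (mode_prod (slice b T) k V)"
    using ix S' by (simp add: snd_gram sl)
  also have "\<dots> = tinner (slice a T) (slice b T)"
    using k V S by (intro tinner_mode_prod_orthcols) (auto simp: slice_def unit_row_def)
  also have "\<dots> = snd (gram T) ix" using ix S by (simp add: snd_gram)
  finally show "snd (gram (mode_prod T k V)) ix = snd (gram T) ix" .
qed simp_all

lemma gram_mprods_from_orthcols: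
  "1 \<le> j \<Longrightarrow> j + length Us \<le> length (fst T) \<Longrightarrow>
   (\<forall>i<length Us. orthcols (Us ! i) \<and> ncols (Us ! i) = fst T ! (j + i)) \<Longrightarrow>
   gram (mprods_from j T Us) = gram T"
proof (induction Us arbitrary: j T)
  case (Cons U Us)
  have U: "orthcols U" "ncols U = fst T ! j"
    using Cons.prems(3)[rule_format, of 0] by simp_all
  have "gram (mprods_from (Suc j) (mode_prod T j U) Us) = gram (mode_prod T j U)"
  proof (rule Cons.IH)
    show "\<forall>i<length Us. orthcols (Us ! i) \<and> ncols (Us ! i) = fst (mode_prod T j U) ! (Suc j + i)"
    proof (intro allI impI)
      fix i assume "i < length Us"
      then show "orthcols (Us ! i) \<and> ncols (Us ! i) = fst (mode_prod T j U) ! (Suc j + i)"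
        using Cons.prems(3)[rule_format, of "Suc i"] by simp
    qed
  qed (use Cons.prems in simp_all)
  also have "\<dots> = gram T" using Cons.prems U by (intro gram_mode_prod_orthcols) auto
  finally show ?case by simp
qed simp

lemma orthcols_tr_matz_0_iff: "orthcols (tr (matz 0 X)) \<longleftrightarrow> gram X = eye (fst X ! 0)"
  by (simp add: orthcols_def gram_def tr_tr nrows_def)

definition col :: "tsr \<Rightarrow> nat \<Rightarrow> tsr" where
  "col A b = mk [nrows A, 1] (\<lambda>ix. snd A [ix ! 0, b])"

definition factors_through :: "tsr \<Rightarrow> tsr \<Rightarrow> bool" where
  "factors_through U A \<longleftrightarrow> (\<exists>W. wf_t W \<and> length (fst W) = 2 \<and> fst W ! 0 = ncols U \<and> A = mmul U W)"

lemma fst_hcat [simp]: "fst (hcat A B) = [nrows A, ncols A + ncols B]"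
  by (simp add: hcat_def)

lemma nrows_hcat [simp]: "nrows (hcat A B) = nrows A"
  by (simp add: nrows_def)

lemma ncols_hcat [simp]: "ncols (hcat A B) = ncols A + ncols B"
  by (simp add: ncols_def)

lemma col_hcat_in_colspan:
  assumes "nrows A = nrows B" "b < ncols B"
  shows "col B b \<in> colspan (hcat A B)"
proof -
  define x where "x = mk [ncols A + ncols B, 1] (\<lambda>ix. if ix ! 0 = ncols A + b then 1 else 0)"
  have "col B b = mmul (hcat A B) x"
  proof (rule tensor_eqI)
    fix ix assume "ix \<in> idx (fst (col B b))"
    then obtain a where ix: "ix = [a, 0]" "a < nrows B"
      by (auto simp: col_def elim: idx_pairE)
    have "snd (mmul (hcat A B) x) ix =
        (\<Sum>j<ncols A + ncols B. snd (hcat A B) [a, j] * (if j = ncols A + b then 1 else 0))"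
      using ix assms by (auto simp: snd_mmul x_def snd_mk nrows_def intro!: sum.cong)
    also have "\<dots> = (\<Sum>j<ncols A + ncols B. if j = ncols A + b then snd (hcat A B) [a, j] else 0)"
      by (rule sum.cong) auto
    also have "\<dots> = snd (hcat A B) [a, ncols A + b]" using assms by simp
    also have "\<dots> = snd B [a, b]" using ix assms by (simp add: hcat_def snd_mk)
    finally show "snd (col B b) ix = snd (mmul (hcat A B) x) ix" using ix by (simp add: col_def snd_mk)
  qed (use assms in \<open>simp_all add: col_def x_def nrows_def\<close>)
  moreover have "wf_t x \<and> fst x = [ncols (hcat A B), 1]" by (simp add: x_def)
  ultimately show ?thesis unfolding colspan_def by blast
qed

lemma factor_if_cols_in_colspan:
  assumes A: "is_mat A" and M: "is_mat M" "nrows A = nrows M"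
    and cols: "\<forall>b<ncols A. col A b \<in> colspan M"
  obtains W where "wf_t W" "fst W = [ncols M, ncols A]" "A = mmul M W"
proof -
  from cols have "\<forall>b. \<exists>x. b < ncols A \<longrightarrow> wf_t x \<and> fst x = [ncols M, 1] \<and> col A b = mmul M x"
    by (auto simp: colspan_def)
  then obtain xf where xf: "\<And>b. b < ncols A \<Longrightarrow> wf_t (xf b) \<and> fst (xf b) = [ncols M, 1] \<and> col A b = mmul M (xf b)"
    by metis
  define W where "W = mk [ncols M, ncols A] (\<lambda>ix. snd (xf (ix ! 1)) [ix ! 0, 0])"
  have "A = mmul M W"
  proof (rule tensor_eqI)
    show "fst A = fst (mmul M W)" "wf_t A" using A M by (simp_all add: is_mat_shape W_def is_mat_def)
    fix ix assume "ix \<in> idx (fst A)"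
    then have "ix \<in> idx [nrows A, ncols A]" using A by (simp add: is_mat_shape[symmetric])
    then obtain a b where ix: "ix = [a, b]" "a < nrows A" "b < ncols A" by (rule idx_pairE)
    have "snd A ix = snd (col A b) [a, 0]" using ix by (simp add: col_def snd_mk)
    also have "\<dots> = snd (mmul M (xf b)) [a, 0]" using xf ix by simp
    also have "\<dots> = snd (mmul M W) ix"
      using xf[of b] ix M by (auto simp: snd_mmul W_def snd_mk nrows_def ncols_def intro!: sum.cong)
    finally show "snd A ix = snd (mmul M W) ix" .
  qed simp
  moreover have "wf_t W" "fst W = [ncols M, ncols A]" by (simp_all add: W_def)
  ultimately show ?thesis using that by blast
qed

section \<open>Differentiation along curves of tensors\<close>

lemma has_real_derivative_mode_prod:
  assumes d: "\<forall>ix. ((\<lambda>s. snd (a s) ix) has_real_derivative snd a' ix) (at t within T)"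
    and sh: "\<forall>s\<in>T. fst (a s) = fst a'" and t: "t \<in> T"
  shows "\<forall>ix. ((\<lambda>s. snd (mode_prod (a s) k B) ix) has_real_derivative snd (mode_prod a' k B) ix)
           (at t within T)"
proof
  fix ix
  define h where "h s = (if ix \<in> idx ((fst a')[k := fst B ! 0])
      then \<Sum>j<fst a' ! k. snd B [ix ! k, j] * snd (a s) (ix[k := j]) else 0)" for s
  have "(h has_real_derivative snd (mode_prod a' k B) ix) (at t within T)"
    unfolding h_def by (simp add: snd_mode_prod, intro conjI impI DERIV_sum DERIV_cmult d[rule_format])
  then show "((\<lambda>s. snd (mode_prod (a s) k B) ix) has_real_derivative snd (mode_prod a' k B) ix) (at t within T)"
    by (rule has_field_derivative_transform_within[OF _ zero_less_one t])
      (simp add: h_def snd_mode_prod sh)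
qed

lemma has_real_derivative_mprods_from:
  "\<forall>ix. ((\<lambda>s. snd (a s) ix) has_real_derivative snd a' ix) (at t within T) \<Longrightarrow>
   \<forall>s\<in>T. fst (a s) = fst a' \<Longrightarrow> t \<in> T \<Longrightarrow>
   \<forall>ix. ((\<lambda>s. snd (mprods_from j (a s) Us) ix) has_real_derivative snd (mprods_from j a' Us) ix)
     (at t within T)"
proof (induction Us arbitrary: j a a')
  case (Cons U Us)
  then show ?case by (simp, intro Cons.IH has_real_derivative_mode_prod) auto
qed simp

lemma grad_C1_shape: "grad_C1 S E G \<Longrightarrow> A \<in> tens_space S \<Longrightarrow> fst (G A) = S"
  unfolding grad_C1_def tens_space_def by blast

lemma tendsto_zero_if_dominated:
  fixes f g :: "'a \<Rightarrow> real"
  assumes small: "\<And>\<epsilon>. 0 < \<epsilon> \<Longrightarrow> eventually (\<lambda>s. \<bar>f s\<bar> \<le> \<epsilon> * g s) F"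
    and bounded: "eventually (\<lambda>s. g s \<le> K) F"
  shows "(f \<longlongrightarrow> 0) F"
proof (rule tendstoI)
  fix e :: real assume e: "0 < e"
  define \<epsilon> where "\<epsilon> = e / (\<bar>K\<bar> + 1)"
  have \<epsilon>: "0 < \<epsilon>" "\<epsilon> * \<bar>K\<bar> < e"
    using e by (simp_all add: \<epsilon>_def field_simps)
  show "eventually (\<lambda>s. dist (f s) 0 < e) F"
    using small[OF \<epsilon>(1)] bounded
  proof eventually_elim
    case (elim s)
    have "\<epsilon> * g s \<le> \<epsilon> * \<bar>K\<bar>" using elim \<epsilon>(1) by (intro mult_left_mono) auto
    then show ?case using elim \<epsilon>(2) by simp
  qed
qed

text \<open>The remainder is \<open>o(\<parallel>Y s - Y t\<parallel>)\<close> by differentiability of \<open>E\<close>, and \<open>\<parallel>Y s - Y t\<parallel> / \<bar>s - t\<bar>\<close>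
  stays bounded because it converges to \<open>\<parallel>Y'(t)\<parallel>\<close>.\<close>

lemma grad_C1_remainder:
  assumes grad: "grad_C1 S E G" and t: "t \<in> T"
    and sp: "\<forall>s\<in>T. Y s \<in> tens_space S"
    and d: "\<forall>ix. ((\<lambda>s. snd (Y s) ix) has_real_derivative snd Yd ix) (at t within T)"
  shows "((\<lambda>s. (E (Y s) - E (Y t) - (\<Sum>ix\<in>idx S. snd (G (Y t)) ix * (snd (Y s) ix - snd (Y t) ix)))
      / (s - t)) \<longlongrightarrow> 0) (at t within T)"
proof (rule tendsto_zero_if_dominated)
  let ?I = "idx S"
  have Yt: "Y t \<in> tens_space S" using sp t by simp
  define q where "q ix s = (snd (Y s) ix - snd (Y t) ix) / (s - t)" for ix s
  have q: "((\<lambda>s. q ix s) \<longlongrightarrow> snd Yd ix) (at t within T)" for ix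
    using d[rule_format, of ix] unfolding has_field_derivative_iff q_def .
  define dist_Y where "dist_Y s = sqrt (\<Sum>ix\<in>?I. (snd (Y s) ix - snd (Y t) ix)\<^sup>2)" for s
  have dist_Y_quot: "dist_Y s / \<bar>s - t\<bar> = sqrt (\<Sum>ix\<in>?I. (q ix s)\<^sup>2)" for s
  proof -
    have "(\<Sum>ix\<in>?I. (q ix s)\<^sup>2) = (\<Sum>ix\<in>?I. (snd (Y s) ix - snd (Y t) ix)\<^sup>2) / (s - t)\<^sup>2"
      by (simp add: q_def power_divide sum_divide_distrib)
    then show ?thesis by (simp add: dist_Y_def real_sqrt_divide)
  qed
  have "((\<lambda>s. sqrt (\<Sum>ix\<in>?I. (q ix s)\<^sup>2)) \<longlongrightarrow> sqrt (\<Sum>ix\<in>?I. (snd Yd ix)\<^sup>2)) (at t within T)"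
    by (intro tendsto_real_sqrt tendsto_sum tendsto_power q)
  then have "eventually (\<lambda>s. sqrt (\<Sum>ix\<in>?I. (q ix s)\<^sup>2) < sqrt (\<Sum>ix\<in>?I. (snd Yd ix)\<^sup>2) + 1)
      (at t within T)"
    by (rule order_tendstoD) simp
  then show "eventually (\<lambda>s. dist_Y s / \<bar>s - t\<bar> \<le> sqrt (\<Sum>ix\<in>?I. (snd Yd ix)\<^sup>2) + 1) (at t within T)"
    unfolding dist_Y_quot by (rule eventually_mono) simp
  fix \<epsilon> :: real assume \<epsilon>: "0 < \<epsilon>"
  obtain \<delta> where \<delta>: "\<delta> > 0" and expansion: "\<And>B. B \<in> tens_space S \<Longrightarrow> tnorm (tsub B (Y t)) < \<delta> \<Longrightarrow>
        \<bar>E B - E (Y t) - tinner (G (Y t)) (tsub B (Y t))\<bar> \<le> \<epsilon> * tnorm (tsub B (Y t))"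
    using grad Yt \<epsilon> unfolding grad_C1_def by blast
  have cont: "((\<lambda>s. snd (Y s) ix) \<longlongrightarrow> snd (Y t) ix) (at t within T)" for ix
    using DERIV_continuous[OF d[rule_format, of ix]] unfolding continuous_within .
  have "(dist_Y \<longlongrightarrow> sqrt (\<Sum>ix\<in>?I. (snd (Y t) ix - snd (Y t) ix)\<^sup>2)) (at t within T)"
    unfolding dist_Y_def by (intro tendsto_real_sqrt tendsto_sum tendsto_power tendsto_diff cont tendsto_const)
  then have "eventually (\<lambda>s. dist_Y s < \<delta>) (at t within T)"
    using \<delta> by (intro order_tendstoD) simp_all
  moreover have "eventually (\<lambda>s. s \<in> T) (at t within T)"
    by (simp add: eventually_at_filter)
  ultimately show "eventually (\<lambda>s. \<bar>(E (Y s) - E (Y t) - (\<Sum>ix\<in>?I. snd (G (Y t)) ix * (snd (Y s) ix - snd (Y t) ix)))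
      / (s - t)\<bar> \<le> \<epsilon> * (dist_Y s / \<bar>s - t\<bar>)) (at t within T)"
  proof eventually_elim
    case (elim s)
    have fYs: "fst (Y s) = S" and Gt: "fst (G (Y t)) = S"
      using sp elim grad Yt by (simp_all add: tens_space_def grad_C1_shape)
    have "tnorm (tsub (Y s) (Y t)) = dist_Y s"
      using fYs by (auto simp: tnorm_def dist_Y_def tinner_def tsub_def snd_mk power2_eq_square
          intro!: arg_cong[where f=sqrt] sum.cong)
    moreover have "tinner (G (Y t)) (tsub (Y s) (Y t)) =
        (\<Sum>ix\<in>?I. snd (G (Y t)) ix * (snd (Y s) ix - snd (Y t) ix))"
      using Gt fYs by (auto simp: tinner_def tsub_def snd_mk intro!: sum.cong)
    ultimately show ?case
      using expansion[of "Y s"] sp elim by (simp add: abs_divide divide_right_mono)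
  qed
qed

lemma grad_C1_chain_rule:
  assumes grad: "grad_C1 S E G" and t: "t \<in> T"
    and sp: "\<forall>s\<in>T. Y s \<in> tens_space S"
    and d: "\<forall>ix. ((\<lambda>s. snd (Y s) ix) has_real_derivative snd Yd ix) (at t within T)"
  shows "((\<lambda>s. E (Y s)) has_real_derivative tinner (G (Y t)) Yd) (at t within T)"
proof -
  let ?I = "idx S"
  have Gt: "fst (G (Y t)) = S" using grad sp t by (simp add: grad_C1_shape)
  define lin where "lin s = (\<Sum>ix\<in>?I. snd (G (Y t)) ix * (snd (Y s) ix - snd (Y t) ix))" for s
  have "lin s / (s - t) = (\<Sum>ix\<in>?I. snd (G (Y t)) ix * ((snd (Y s) ix - snd (Y t) ix) / (s - t)))" for s
    unfolding lin_def by (simp add: sum_divide_distrib)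
  moreover have "((\<lambda>s. (snd (Y s) ix - snd (Y t) ix) / (s - t)) \<longlongrightarrow> snd Yd ix) (at t within T)" for ix
    using d[rule_format, of ix] unfolding has_field_derivative_iff .
  ultimately have "((\<lambda>s. lin s / (s - t)) \<longlongrightarrow> tinner (G (Y t)) Yd) (at t within T)"
    unfolding tinner_def Gt by (simp only:) (intro tendsto_sum tendsto_mult_left)
  moreover have "((\<lambda>s. (E (Y s) - E (Y t) - lin s) / (s - t)) \<longlongrightarrow> 0) (at t within T)"
    unfolding lin_def using assms by (rule grad_C1_remainder)
  ultimately have "((\<lambda>s. lin s / (s - t) + (E (Y s) - E (Y t) - lin s) / (s - t)) \<longlongrightarrow> tinner (G (Y t)) Yd + 0)
      (at t within T)"
    by (rule tendsto_add)
  then show ?thesis by (simp add: has_field_derivative_iff add_divide_distrib[symmetric])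
qed

text \<open>Mean value theorem for \<open>\<phi> s + \<alpha>\<^sup>2 (s - t\<^sub>0)\<close>, whose derivative \<open>\<alpha>\<^sup>2 - n(s)\<^sup>2\<close> is nonpositive.\<close>

lemma decrease_by_squared_inf_rate:
  fixes \<phi> n :: "real \<Rightarrow> real"
  assumes t01: "t0 < t1" and n: "\<And>s. 0 \<le> n s"
    and deriv: "\<And>s. s \<in> {t0..t1} \<Longrightarrow> (\<phi> has_real_derivative - (n s)\<^sup>2) (at s within {t0..t1})"
  shows "\<phi> t1 \<le> \<phi> t0 - (INF \<mu>\<in>{0..1}. n (t0 + \<mu> * (t1 - t0)))\<^sup>2 * (t1 - t0)"
proof -
  let ?T = "{t0..t1}"
  define \<alpha> where "\<alpha> = (INF \<mu>\<in>{0..1}. n (t0 + \<mu> * (t1 - t0)))"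
  have bdd: "bdd_below ((\<lambda>\<mu>. n (t0 + \<mu> * (t1 - t0))) ` {0..1})"
    by (rule bdd_belowI[of _ 0]) (auto simp: n)
  have \<alpha>0: "0 \<le> \<alpha>" unfolding \<alpha>_def by (rule cINF_greatest) (auto simp: n)
  define \<psi> where "\<psi> s = \<phi> s + \<alpha>\<^sup>2 * (s - t0)" for s
  have d\<psi>: "(\<psi> has_real_derivative - (n s)\<^sup>2 + \<alpha>\<^sup>2) (at s within ?T)" if "s \<in> ?T" for s
    unfolding \<psi>_def[abs_def] using deriv[OF that] by (auto intro!: derivative_eq_intros)
  have "continuous_on ?T \<psi>"
    unfolding continuous_on_eq_continuous_within using d\<psi> DERIV_continuous by blast
  moreover have "\<psi> differentiable (at s)" if "t0 < s" "s < t1" for s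
    using d\<psi>[of s] that by (metis at_within_Icc_at atLeastAtMost_iff less_le real_differentiable_def)
  ultimately obtain l z where z: "t0 < z" "z < t1" and lz: "(\<psi> has_real_derivative l) (at z)"
    and mvt: "\<psi> t1 - \<psi> t0 = (t1 - t0) * l"
    using MVT[OF t01] by blast
  have "(\<psi> has_real_derivative - (n z)\<^sup>2 + \<alpha>\<^sup>2) (at z)"
    using d\<psi>[of z] z by (simp add: at_within_Icc_at)
  then have l: "l = - (n z)\<^sup>2 + \<alpha>\<^sup>2" using lz DERIV_unique by blast
  define \<mu> where "\<mu> = (z - t0) / (t1 - t0)"
  have "\<mu> \<in> {0..1}" "t0 + \<mu> * (t1 - t0) = z" using z t01 by (simp_all add: \<mu>_def)
  then have "\<alpha> \<le> n z" unfolding \<alpha>_def by (metis cINF_lower[OF bdd])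
  then have "l \<le> 0" using l \<alpha>0 power_mono by fastforce
  then have "(t1 - t0) * l \<le> 0" using t01 by (simp add: mult_nonneg_nonpos)
  then have "\<psi> t1 \<le> \<psi> t0" using mvt by linarith
  then show ?thesis by (simp add: \<psi>_def \<alpha>_def algebra_simps)
qed

section \<open>Energy decay of the Galerkin gradient flow\<close>

lemma galerkin_energy_derivative:
  fixes E :: "tsr \<Rightarrow> real"
  assumes grad: "grad_C1 S E G"
    and ode: "ode_sol (\<lambda>t C. mprods (tneg (G (mprods C Uhs))) (map tr Uhs)) t0 t1 C0h c"
    and shape: "fst (mprods C0h Uhs) = S"
    and len: "1 + length Uhs \<le> length (fst C0h)"
    and Uhs: "\<forall>k<length Uhs. is_mat (Uhs ! k) \<and> ncols (Uhs ! k) = fst C0h ! Suc k"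
    and s: "s \<in> {t0..t1}"
  shows "((\<lambda>s. E (mprods (c s) Uhs)) has_real_derivative
           - (tnorm (mprods (G (mprods (c s) Uhs)) (map tr Uhs)))\<^sup>2) (at s within {t0..t1})"
proof -
  let ?T = "{t0..t1}"
  define Y where "Y s = mprods (c s) Uhs" for s
  define g where "g s = mprods (G (Y s)) (map tr Uhs)" for s
  have c: "c s \<in> tens_space (fst C0h)" if "s \<in> ?T" for s
    using ode that by (simp add: ode_sol_def)
  then have fc: "fst (c s) = fst C0h" if "s \<in> ?T" for s
    using that by (simp add: tens_space_def)
  have Y: "Y s \<in> tens_space S" if "s \<in> ?T" for s
    using c[OF that] fc[OF that] shape
    by (simp add: Y_def mprods_def tens_space_def fst_mprods_from_cong[of "c s" C0h])
  have GY: "fst (G (Y s)) = S" using grad Y[OF s] by (rule grad_C1_shape)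
  have fg: "fst (g s) = fst C0h"
  proof -
    have "fst (g s) = fst (mprods (mprods C0h Uhs) (map tr Uhs))"
      unfolding g_def mprods_def using GY shape by (intro fst_mprods_from_cong) (simp add: mprods_def)
    also have "\<dots> = fst C0h"
      unfolding mprods_def using len Uhs by (intro fst_mprods_from_back) auto
    finally show ?thesis .
  qed
  have lenS: "length S = length (fst C0h)" using shape by (metis mprods_def length_fst_mprods_from)
  have dc: "\<forall>ix. ((\<lambda>s. snd (c s) ix) has_real_derivative snd (tneg (g s)) ix) (at s within ?T)"
  proof -
    have "\<forall>ix. ((\<lambda>s. snd (c s) ix) has_real_derivative snd (mprods (tneg (G (Y s))) (map tr Uhs)) ix)
        (at s within ?T)"
      using ode s unfolding ode_sol_def Y_def by blast
    moreover have "mprods (tneg (G (Y s))) (map tr Uhs) = tneg (g s)"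
      unfolding g_def mprods_def using GY lenS len by (intro mprods_from_tneg) simp
    ultimately show ?thesis by simp
  qed
  have dY: "\<forall>ix. ((\<lambda>s. snd (Y s) ix) has_real_derivative snd (mprods (tneg (g s)) Uhs) ix) (at s within ?T)"
    unfolding Y_def mprods_def using dc fc fg s by (intro has_real_derivative_mprods_from) auto
  have "((\<lambda>s. E (Y s)) has_real_derivative tinner (G (Y s)) (mprods (tneg (g s)) Uhs)) (at s within ?T)"
    using grad s Y dY by (intro grad_C1_chain_rule) auto
  moreover have "tinner (G (Y s)) (mprods (tneg (g s)) Uhs) =
      tinner (mprods (G (Y s)) (map tr Uhs)) (tneg (g s))"
    unfolding mprods_def
  proof (rule tinner_mprods_from_adjoint)
    show "1 + length Uhs \<le> length (fst (tneg (g s)))" using fg len by simp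
    show "\<forall>k<length Uhs. length (fst (Uhs ! k)) = 2 \<and> ncols (Uhs ! k) = fst (tneg (g s)) ! (1 + k)"
      using Uhs fg by (simp add: is_mat_def)
    show "fst (G (Y s)) = fst (mprods_from 1 (tneg (g s)) Uhs)"
      using GY shape fg by (simp add: mprods_def fst_mprods_from_cong[of "tneg (g s)" C0h])
  qed
  ultimately show ?thesis by (simp add: Y_def g_def tinner_tneg_right tnorm_power2)
qed

lemma galerkin_energy_decay:
  fixes E :: "tsr \<Rightarrow> real"
  assumes grad: "grad_C1 S E G" and t01: "t0 < t1"
    and ode: "ode_sol (\<lambda>t C. mprods (tneg (G (mprods C Uhs))) (map tr Uhs)) t0 t1 C0h c"
    and shape: "fst (mprods C0h Uhs) = S"
    and len: "1 + length Uhs \<le> length (fst C0h)"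
    and Uhs: "\<forall>k<length Uhs. is_mat (Uhs ! k) \<and> ncols (Uhs ! k) = fst C0h ! Suc k"
  shows "E (mprods (c t1) Uhs) \<le> E (mprods C0h Uhs)
     - (INF \<mu>\<in>{0..1}. tnorm (mprods (G (mprods (c (t0 + \<mu> * (t1 - t0))) Uhs)) (map tr Uhs)))\<^sup>2 * (t1 - t0)"
proof -
  have "c t0 = C0h" using ode by (simp add: ode_sol_def)
  moreover have "E (mprods (c t1) Uhs) \<le> E (mprods (c t0) Uhs)
     - (INF \<mu>\<in>{0..1}. tnorm (mprods (G (mprods (c (t0 + \<mu> * (t1 - t0))) Uhs)) (map tr Uhs)))\<^sup>2 * (t1 - t0)"
    using t01 tnorm_nonneg galerkin_energy_derivative[OF grad ode shape len Uhs]
    by (rule decrease_by_squared_inf_rate)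
  ultimately show ?thesis by simp
qed

section \<open>The augmented bases reproduce the starting value\<close>

lemma fst_ttnX_TN_0: "ttn_wf (TN C Ys) \<Longrightarrow> fst (ttnX (TN C Ys)) ! 0 = fst C ! 0"
  unfolding ttnX_TN mprods_def by (simp add: nth_fst_mprods_from del: ttnX.simps)

lemma ncols_Ubasis_TN: "ttn_wf (TN C Ys) \<Longrightarrow> ncols (Ubasis (TN C Ys)) = fst C ! 0"
  by (simp add: fst_Ubasis ncols_def fst_ttnX_TN_0 del: ttn_wf.simps ttnX.simps)

lemma ttn_wf_TN_mode_prod_0:
  "ttn_wf (TN C Ys) \<Longrightarrow> fst R = [fst C ! 0, fst C ! 0] \<Longrightarrow> ttn_wf (TN (mode_prod C 0 R) Ys)"
  by (simp del: ttnX.simps)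

lemma rai_shapes:
  assumes "rai Y F t0 t1 Uhs c Y1 C0h" "t0 \<le> t1" "ttn_wf Y"
  obtains C0 Ys Xhs where "Y = TN C0 Ys" "Y1 = TN (c t1) Xhs" "Uhs = map Ubasis Xhs"
    "length Xhs = length Ys" "fst (c t1) = fst C0h" "wf_t C0h" "length (fst C0h) = length (fst C0)"
    "\<forall>k<length Ys. fst C0h ! Suc k = ncols (Uhs ! k)"
  using assms(1)
proof cases
  case (step Qs Ys Rs Xhs C0 Mhs)
  have "c t1 \<in> tens_space (fst C0h)" "c t0 \<in> tens_space (fst C0h)" "c t0 = C0h"
    using step(10) assms(2) by (auto simp: ode_sol_def)
  then have fc: "fst (c t1) = fst C0h" "wf_t C0h" by (auto simp: tens_space_def)
  have wf: "length (fst C0) = Suc (length Ys)" "\<forall>k<length Ys. fst C0 ! Suc k = ncols (Ubasis (Ys ! k))"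
    using assms(3) step by simp_all
  have "fst C0h ! Suc k = ncols (Uhs ! k)" if k: "k < length Ys" for k
  proof -
    have "fst C0h ! Suc k = fst (Mhs ! k) ! 0"
      using step(9) nth_fst_mprods_from[of 1 Mhs C0 "Suc k"] wf step k by (simp add: mprods_def)
    also have "\<dots> = ncols (Uhs ! k)" using step k by (simp add: fst_Ubasis nrows_def)
    finally show ?thesis .
  qed
  then show ?thesis using that step fc by (simp add: mprods_def)
qed

lemma snd_mode_prod_via_QR:
  assumes i: "i < length (fst C0)" and QR: "tr (matz i C0) = mmul Q R"
    and Q: "fst Q = [prod_list (remove_nth i (fst C0)), fst C0 ! i]" and R: "fst R = [fst C0 ! i, fst C0 ! i]"
    and V: "length (fst V) = 2"
    and ix: "ix \<in> idx ((fst C0)[i := fst V ! 0])"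
  shows "snd (mode_prod C0 i V) ix = (\<Sum>a<fst C0 ! i.
     snd Q [lin (remove_nth i (fst C0)) (remove_nth i ix), a] * snd (mmul V (tr R)) [ix ! i, a])"
proof -
  let ?r = "fst C0 ! i" let ?c = "lin (remove_nth i (fst C0)) (remove_nth i ix)"
  have c: "?c < prod_list (remove_nth i (fst C0))"
    by (rule lin_less[OF remove_nth_in_idx_update[OF ix i]])
  have "ix ! i < ((fst C0)[i := fst V ! 0]) ! i" by (rule idx_nth_less[OF ix]) (simp add: i)
  then have x: "ix ! i < fst V ! 0" using i by simp
  have "snd (mode_prod C0 i V) ix = (\<Sum>j<?r. snd V [ix ! i, j] * snd (matz i C0) [j, ?c])"
    using ix i by (simp add: snd_mode_prod snd_eq_matz_entry[OF i ix])
  also have "\<dots> = (\<Sum>j<?r. snd V [ix ! i, j] * (\<Sum>a<?r. snd Q [?c, a] * snd R [a, j]))"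
  proof (rule sum.cong[OF refl])
    fix j assume j: "j \<in> {..<?r}"
    have "snd (matz i C0) [j, ?c] = snd (tr (matz i C0)) [?c, j]" using c j by (simp add: nrows_def ncols_def)
    also have "\<dots> = (\<Sum>a<?r. snd Q [?c, a] * snd R [a, j])" unfolding QR using R Q c j by (simp add: snd_mmul)
    finally show "snd V [ix ! i, j] * snd (matz i C0) [j, ?c] =
        snd V [ix ! i, j] * (\<Sum>a<?r. snd Q [?c, a] * snd R [a, j])" by simp
  qed
  also have "\<dots> = (\<Sum>j<?r. \<Sum>a<?r. snd Q [?c, a] * (snd V [ix ! i, j] * snd R [a, j]))"
    by (simp add: sum_distrib_left mult.left_commute)
  also have "\<dots> = (\<Sum>a<?r. \<Sum>j<?r. snd Q [?c, a] * (snd V [ix ! i, j] * snd R [a, j]))"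
    by (rule sum.swap)
  also have "\<dots> = (\<Sum>a<?r. snd Q [?c, a] * (\<Sum>j<?r. snd V [ix ! i, j] * snd R [a, j]))"
    by (simp add: sum_distrib_left)
  also have "\<dots> = (\<Sum>a<?r. snd Q [?c, a] * snd (mmul V (tr R)) [ix ! i, a])"
    using R x by (auto simp: snd_mmul nrows_def ncols_def intro!: sum.cong)
  finally show ?thesis .
qed

text \<open>\<open>mat\<^sub>i(C0 \<times>\<^sub>i V) = V mat\<^sub>i(C0) = (V R\<^sup>T) Q\<^sup>T\<close>.\<close>

lemma mode_prod_eq_if_mmul_tr_eq:
  assumes i: "i < length (fst C0)" and QR: "tr (matz i C0) = mmul Q R"
    and Q: "fst Q = [prod_list (remove_nth i (fst C0)), fst C0 ! i]" and R: "fst R = [fst C0 ! i, fst C0 ! i]"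
    and V: "length (fst V) = 2" "length (fst V') = 2" "fst V ! 0 = fst V' ! 0"
    and eq: "mmul V (tr R) = mmul V' (tr R)"
  shows "mode_prod C0 i V = mode_prod C0 i V'"
proof (rule tensor_eqI)
  fix ix assume "ix \<in> idx (fst (mode_prod C0 i V))"
  then have ix: "ix \<in> idx ((fst C0)[i := fst V ! 0])" "ix \<in> idx ((fst C0)[i := fst V' ! 0])"
    using V by simp_all
  show "snd (mode_prod C0 i V) ix = snd (mode_prod C0 i V') ix"
    using snd_mode_prod_via_QR[OF i QR Q R V(1) ix(1)] snd_mode_prod_via_QR[OF i QR Q R V(2) ix(2)] eq
    by simp
qed (use V in simp_all)

lemma projection_fixes_factor:
  assumes Uh: "orthcols Uh" and U: "is_mat U" "ncols U = ncols R"
    and fac: "factors_through Uh (mmul U (tr R))"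
  shows "mmul (mmul Uh (mmul (tr Uh) U)) (tr R) = mmul U (tr R)"
proof -
  obtain W where W: "wf_t W" "length (fst W) = 2" "fst W ! 0 = ncols Uh" and eq: "mmul U (tr R) = mmul Uh W"
    using fac unfolding factors_through_def by blast
  have l: "length (fst U) = 2" "length (fst Uh) = 2" "fst W \<noteq> []"
    using U Uh W by (auto simp: is_mat_def orthcols_def)
  have "mmul (mmul Uh (mmul (tr Uh) U)) (tr R) = mmul Uh (mmul (mmul (tr Uh) U) (tr R))"
    using l U by (subst mmul_assoc) (simp_all add: ncols_def)
  also have "mmul (mmul (tr Uh) U) (tr R) = mmul (tr Uh) (mmul U (tr R))"
    using l U by (subst mmul_assoc) (simp_all add: ncols_def)
  also have "\<dots> = mmul (mmul (tr Uh) Uh) W" unfolding eq using l W by (subst mmul_assoc) (simp_all add: ncols_def)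
  also have "\<dots> = mmul (eye (fst W ! 0)) W" using Uh W by (simp add: orthcols_def)
  also have "\<dots> = W" using W(1) l(3) by (rule mmul_eye)
  finally show ?thesis using eq by simp
qed

lemma mprods_projected_connection:
  assumes len: "length (fst C0) = Suc (length Us)" "length Uhs = length Us"
    and Us: "\<forall>k<length Us. is_mat (Us ! k) \<and> ncols (Us ! k) = fst C0 ! Suc k"
    and QR: "\<forall>k<length Us. fst (Qs ! k) = [prod_list (remove_nth (Suc k) (fst C0)), fst C0 ! Suc k]
        \<and> fst (Rs ! k) = [fst C0 ! Suc k, fst C0 ! Suc k] \<and> tr (matz (Suc k) C0) = mmul (Qs ! k) (Rs ! k)"
    and Uhs: "\<forall>k<length Us. orthcols (Uhs ! k) \<and> factors_through (Uhs ! k) (mmul (Us ! k) (tr (Rs ! k)))"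
  shows "mprods (mprods C0 (map (\<lambda>k. mmul (tr (Uhs ! k)) (Us ! k)) [0..<length Us])) Uhs = mprods C0 Us"
proof -
  let ?M = "map (\<lambda>k. mmul (tr (Uhs ! k)) (Us ! k)) [0..<length Us]"
  have "mprods (mprods C0 ?M) Uhs = mprods C0 (map (\<lambda>(U, M). mmul U M) (zip Uhs ?M))"
    unfolding mprods_def using len Us by (intro mprods_from_mprods_from) (auto simp: is_mat_def ncols_def)
  also have "\<dots> = mprods C0 Us"
    unfolding mprods_def
  proof (rule mprods_from_cong)
    show "\<forall>k<length Us. mode_prod C0 (1 + k) (map (\<lambda>(U, M). mmul U M) (zip Uhs ?M) ! k)
        = mode_prod C0 (1 + k) (Us ! k)"
    proof (intro allI impI)
      fix k assume k: "k < length Us"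
      let ?Uh = "Uhs ! k" and ?U = "Us ! k" and ?R = "Rs ! k"
      have Uh: "orthcols ?Uh" "factors_through ?Uh (mmul ?U (tr ?R))" and U: "is_mat ?U"
        using Uhs Us k by auto
      have Q: "fst (Qs ! k) = [prod_list (remove_nth (Suc k) (fst C0)), fst C0 ! Suc k]"
        "tr (matz (Suc k) C0) = mmul (Qs ! k) ?R" "fst ?R = [fst C0 ! Suc k, fst C0 ! Suc k]"
        using QR k by auto
      have proj: "mmul (mmul ?Uh (mmul (tr ?Uh) ?U)) (tr ?R) = mmul ?U (tr ?R)"
        using Uh U Us Q(3) k by (intro projection_fixes_factor) (auto simp: ncols_def)
      have "fst (mmul ?U (tr ?R)) ! 0 = fst (mmul ?Uh (mmul (tr ?Uh) ?U)) ! 0"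
        using arg_cong[OF proj, of "\<lambda>A. fst A ! 0"] Q(3) by simp
      then have "mode_prod C0 (Suc k) (mmul ?Uh (mmul (tr ?Uh) ?U)) = mode_prod C0 (Suc k) ?U"
        using len k U Uh proj Q
        by (intro mode_prod_eq_if_mmul_tr_eq[where Q="Qs ! k" and R="?R"])
           (auto simp: is_mat_def orthcols_def)
      then show "mode_prod C0 (1 + k) (map (\<lambda>(U, M). mmul U M) (zip Uhs ?M) ! k) = mode_prod C0 (1 + k) ?U"
        using len k by simp
    qed
  qed (use len in simp_all)
  finally show ?thesis .
qed

lemma orthcols_Ubasis_TN_tenz_0:
  assumes Qh: "orthcols Qh" "nrows Qh = prod_list (tl S)" and S: "length S = Suc (length Xs)"
    and Xs: "\<forall>i<length Xs. orthcols (Ubasis (Xs ! i)) \<and> ncols (Ubasis (Xs ! i)) = S ! Suc i"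
  shows "orthcols (Ubasis (TN (tenz 0 (ncols Qh # tl S) (tr Qh)) Xs))"
proof -
  define Qten where "Qten = tenz 0 (ncols Qh # tl S) (tr Qh)"
  define Xh where "Xh = mprods Qten (map Ubasis Xs)"
  have fQten: "fst Qten = ncols Qh # tl S" by (simp add: Qten_def)
  have mQh: "is_mat Qh" using Qh by (simp add: orthcols_def)
  have "gram Xh = gram Qten"
    unfolding Xh_def mprods_def
  proof (rule gram_mprods_from_orthcols)
    show "\<forall>i<length (map Ubasis Xs). orthcols (map Ubasis Xs ! i) \<and> ncols (map Ubasis Xs ! i) = fst Qten ! (1 + i)"
      using Xs S fQten by (cases S) auto
  qed (use S fQten in simp_all)
  also have "matz 0 Qten = tr Qh"
    unfolding Qten_def using Qh(2) S by (intro matz_0_tenz_0) (auto simp: ncols_def)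
  then have "gram Qten = eye (ncols Qh)"
    using Qh mQh by (simp add: gram_def tr_tr orthcols_def)
  finally have "gram Xh = eye (fst Xh ! 0)"
    unfolding Xh_def mprods_def using fQten S by (simp add: nth_fst_mprods_from)
  moreover have "Ubasis (TN Qten Xs) = tr (matz 0 Xh)"
    by (simp add: Ubasis_def[abs_def] Xh_def)
  ultimately show ?thesis
    unfolding Qten_def[symmetric] by (simp add: orthcols_tr_matz_0_iff)
qed

lemma augmented_leaf_basis:
  assumes U: "is_mat U" "ncols U = r" and R: "fst R = [r, r]" "wf_t R" and t01: "t0 \<le> t1"
    and ode: "ode_sol F t0 t1 (mmul R (tr U)) y" and onb: "onb_of Uh (hcat (tr (y t1)) U)"
  shows "orthcols (Ubasis (TL Uh)) \<and> factors_through (Ubasis (TL Uh)) (mmul (Ubasis (TL U)) (tr R))"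
proof -
  have oUh: "orthcols Uh" and mUh: "is_mat Uh" using onb by (simp_all add: onb_of_def orthcols_def)
  have "y t1 \<in> tens_space (fst (mmul R (tr U)))" using ode t01 by (simp add: ode_sol_def)
  then have "fst (y t1) = [r, nrows U]" using R by (simp add: tens_space_def)
  then have nyU: "nrows (tr (y t1)) = nrows U" by (simp add: ncols_def)
  then have rows: "nrows U = nrows Uh" and span: "colspan Uh = colspan (hcat (tr (y t1)) U)"
    using onb by (simp_all add: onb_of_def)
  have "\<forall>b<ncols U. col U b \<in> colspan Uh"
    unfolding span using col_hcat_in_colspan[OF nyU] by blast
  then obtain W0 where W0: "wf_t W0" "fst W0 = [ncols Uh, ncols U]" "U = mmul Uh W0"
    using factor_if_cols_in_colspan[OF U(1) mUh rows] by blast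
  have "mmul U (tr R) = mmul (mmul Uh W0) (tr R)" using W0(3) by simp
  also have "\<dots> = mmul Uh (mmul W0 (tr R))"
    by (rule mmul_assoc[symmetric]) (use W0(1,2) R U in \<open>simp_all add: ncols_def nrows_def\<close>)
  finally have "factors_through Uh (mmul U (tr R))"
    unfolding factors_through_def using W0 by (intro exI[of _ "mmul W0 (tr R)"]) simp
  then show ?thesis using U mUh oUh by (simp add: Ubasis_TL)
qed

lemma augmented_root_factor:
  assumes onb: "onb_of Qh (hcat A (tr (matz 0 C)))" and C: "wf_t C" "fst C \<noteq> []"
    and rows: "nrows A = prod_list (tl (fst C))"
  obtains W where "wf_t W" "fst W = [ncols Qh, fst C ! 0]"
    "C = mode_prod (tenz 0 (ncols Qh # tl (fst C)) (tr Qh)) 0 (tr W)"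
proof -
  have mQh: "is_mat Qh" using onb by (simp add: onb_of_def orthcols_def)
  have nQh: "nrows Qh = prod_list (tl (fst C))" using onb rows by (simp add: onb_of_def)
  have "\<forall>b<ncols (tr (matz 0 C)). col (tr (matz 0 C)) b \<in> colspan Qh"
    using onb col_hcat_in_colspan[of A "tr (matz 0 C)"] rows by (simp add: onb_of_def ncols_def)
  moreover have "nrows (tr (matz 0 C)) = nrows Qh" using nQh by (simp add: ncols_def)
  ultimately obtain W where W: "wf_t W" "fst W = [ncols Qh, ncols (tr (matz 0 C))]"
    "tr (matz 0 C) = mmul Qh W"
    using factor_if_cols_in_colspan[OF is_mat_tr mQh] by blast
  have "ncols (tr (matz 0 C)) = fst C ! 0" by (simp add: nrows_def)
  then have fW: "fst W = [ncols Qh, fst C ! 0]" using W(2) by simp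
  have "C = mode_prod (tenz 0 (ncols Qh # tl (fst C)) (tr Qh)) 0 (tr W)"
    using C mQh nQh W fW by (intro tensor_eq_tenz_mode_prod) (auto simp: is_mat_shape)
  with W(1) fW show ?thesis using that by blast
qed

lemma augmented_node_basis:
  assumes wfk: "ttn_wf (TN Ck Ysk)" and R: "fst R = [fst Ck ! 0, fst Ck ! 0]" "wf_t R" and t01: "t0 \<le> t1"
    and run: "rai (TN (mode_prod Ck 0 R) Ysk) F t0 t1 Us' cp (TN C1k Ys1k) C0hk"
    and IH: "mprods C0hk Us' = ttnX (TN (mode_prod Ck 0 R) Ysk)" "\<forall>j<length Us'. orthcols (Us' ! j)"
    and onb: "onb_of Qh (hcat (tr (matz 0 C1k)) (tr (matz 0 C0hk)))"
  defines "Xh \<equiv> TN (tenz 0 (ncols Qh # tl (fst C1k)) (tr Qh)) Ys1k"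
  shows "orthcols (Ubasis Xh) \<and> factors_through (Ubasis Xh) (mmul (Ubasis (TN Ck Ysk)) (tr R))"
proof -
  obtain C0' Ys' Xhs' where o: "TN (mode_prod Ck 0 R) Ysk = TN C0' Ys'" "TN C1k Ys1k = TN (cp t1) Xhs'"
    "Us' = map Ubasis Xhs'" "length Xhs' = length Ys'" "fst (cp t1) = fst C0hk" "wf_t C0hk"
    "length (fst C0hk) = length (fst C0')" "\<forall>k<length Ys'. fst C0hk ! Suc k = ncols (Us' ! k)"
    by (rule rai_shapes[OF run t01 ttn_wf_TN_mode_prod_0[OF wfk R(1)]])
  then have out: "C1k = cp t1" "Ys1k = Xhs'" "Us' = map Ubasis Xhs'" "length Xhs' = length Ysk"
     "fst (cp t1) = fst C0hk" "wf_t C0hk" "length (fst C0hk) = length (fst Ck)"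
     "\<forall>k<length Ysk. fst C0hk ! Suc k = ncols (Us' ! k)"
    by auto
  let ?S = "fst C0hk"
  have lS: "length ?S = Suc (length Ysk)" using out wfk by simp
  have tlC: "tl (fst C1k) = tl ?S" using out by simp
  define Qten where "Qten = tenz 0 (ncols Qh # tl ?S) (tr Qh)"
  have Xh: "Xh = TN Qten Ys1k" by (simp add: Xh_def Qten_def tlC)
  have "orthcols Qh" "nrows Qh = prod_list (tl ?S)"
    using onb tlC by (simp_all add: onb_of_def nrows_def ncols_def)
  then have orth: "orthcols (Ubasis Xh)"
    unfolding Xh Qten_def using lS IH(2) out by (intro orthcols_Ubasis_TN_tenz_0) auto
  have rows: "nrows (tr (matz 0 C1k)) = prod_list (tl ?S)" using tlC by (simp add: ncols_def)
  have "?S \<noteq> []" using lS by auto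
  then obtain W where W: "wf_t W" "fst W = [ncols Qh, ?S ! 0]" and C0hk: "C0hk = mode_prod Qten 0 (tr W)"
    unfolding Qten_def by (rule augmented_root_factor[OF onb out(6) _ rows])
  define Xh0 where "Xh0 = mprods Qten Us'"
  define X0 where "X0 = ttnX (TN Ck Ysk)"
  have fQten: "fst Qten = ncols Qh # tl ?S" by (simp add: Qten_def)
  have eqX: "mode_prod Xh0 0 (tr W) = mode_prod X0 0 R"
  proof -
    have "mprods C0hk Us' = mode_prod Xh0 0 (tr W)"
      unfolding C0hk Xh0_def mprods_def using out lS fQten by (intro mprods_from_mode_prod_commute) auto
    moreover have "ttnX (TN (mode_prod Ck 0 R) Ysk) = mode_prod X0 0 R"
      unfolding X0_def ttnX_TN mprods_def using wfk by (intro mprods_from_mode_prod_commute) auto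
    ultimately show ?thesis using IH(1) by simp
  qed
  have "length (fst Xh0) = Suc (length Ysk)" "length (fst X0) = Suc (length Ysk)"
    unfolding Xh0_def X0_def ttnX_TN mprods_def using fQten lS wfk by simp_all
  moreover have "fst Xh0 ! 0 = ncols Qh"
    unfolding Xh0_def mprods_def using fQten out lS by (simp add: nth_fst_mprods_from)
  moreover have "fst X0 ! 0 = fst Ck ! 0"
    unfolding X0_def using wfk by (rule fst_ttnX_TN_0)
  ultimately have shapes: "fst Xh0 ! 0 = ncols Qh" "fst X0 ! 0 = fst Ck ! 0" "fst Xh0 \<noteq> []" "fst X0 \<noteq> []"
    by auto
  have UXh: "Ubasis Xh = tr (matz 0 Xh0)" and UX0: "Ubasis (TN Ck Ysk) = tr (matz 0 X0)"
    by (simp_all add: Ubasis_def Xh Xh0_def X0_def out ttnX_TN del: ttnX.simps)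
  have "mmul (tr (matz 0 X0)) (tr R) = tr (matz 0 (mode_prod X0 0 R))"
    using shapes R by (intro tr_matz_0_mode_prod_0[symmetric]) simp_all
  also have "\<dots> = tr (matz 0 (mode_prod Xh0 0 (tr W)))" using eqX by simp
  also have "\<dots> = mmul (tr (matz 0 Xh0)) (tr (tr W))"
    using shapes W(2) by (intro tr_matz_0_mode_prod_0) (simp_all add: nrows_def)
  also have "tr (tr W) = W" using W by (simp add: tr_tr is_mat_def)
  finally have "mmul (Ubasis (TN Ck Ysk)) (tr R) = mmul (Ubasis Xh) W" unfolding UXh UX0 .
  moreover have "ncols (Ubasis Xh) = ncols Qh" using UXh shapes by (simp add: nrows_def)
  ultimately have "factors_through (Ubasis Xh) (mmul (Ubasis (TN Ck Ysk)) (tr R))"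
    unfolding factors_through_def using W(1) W(2) by (intro exI[of _ W]) simp
  with orth show ?thesis ..
qed

lemma rai_reproduces_start:
  assumes "rai Y F t0 t1 Uhs c Y1 C0h" "ttn_wf Y" "t0 \<le> t1"
  shows "mprods C0h Uhs = ttnX Y \<and> (\<forall>k<length Uhs. orthcols (Uhs ! k))"
  using assms
proof (induction rule: rai.induct)
  case (step Qs Ys Rs Xhs C0 F t0 t1 Uhs Mhs C0h c)
  have wfC: "length (fst C0) = Suc (length Ys)" "\<forall>k<length Ys. fst C0 ! Suc k = ncols (Ubasis (Ys ! k))"
    "list_all ttn_wf Ys"
    using step.prems by simp_all
  have lU: "length Uhs = length Ys" using step(3,4) by simp
  have child: "orthcols (Uhs ! k) \<and> factors_through (Uhs ! k) (mmul (Ubasis (Ys ! k)) (tr (Rs ! k)))"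
    if k: "k < length Ys" for k
  proof -
    let ?r = "fst C0 ! Suc k"
    have R: "fst (Rs ! k) = [?r, ?r]" "wf_t (Rs ! k)" using step(8) k by blast+
    have wfk: "ttn_wf (Ys ! k)" using wfC(3) k by (simp add: list_all_length)
    have Uk: "Uhs ! k = Ubasis (Xhs ! k)" using step(3,4) k by simp
    from step(8)[rule_format, OF k] show ?thesis
    proof (elim conjE disjE exE)
      fix U y Uh assume Yk: "Ys ! k = TL U" and Xk: "Xhs ! k = TL Uh"
        and ode: "ode_sol (reduced_F F C0 Ys k (Qs ! k)) t0 t1 (mmul (Rs ! k) (tr U)) y"
        and onb: "onb_of Uh (hcat (tr (y t1)) U)"
      have U: "is_mat U" using wfk Yk by simp
      then have "ncols U = ?r" using wfC(2) k Yk by (simp add: Ubasis_TL)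
      from augmented_leaf_basis[OF U this R step.prems(2) ode onb] show ?thesis
        using Yk Xk Uk by simp
    next
      fix Ck Ysk Us' cp C1k Ys1k C0hk Qh
      assume Yk: "Ys ! k = TN Ck Ysk" and Xk: "Xhs ! k = TN (tenz 0 (ncols Qh # tl (fst C1k)) (tr Qh)) Ys1k"
        and run: "rai (TN (mode_prod Ck 0 (Rs ! k)) Ysk) (reduced_F F C0 Ys k (Qs ! k)) t0 t1
                    Us' cp (TN C1k Ys1k) C0hk"
        and IH: "ttn_wf (TN (mode_prod Ck 0 (Rs ! k)) Ysk) \<longrightarrow> t0 \<le> t1 \<longrightarrow>
               mprods C0hk Us' = ttnX (TN (mode_prod Ck 0 (Rs ! k)) Ysk) \<and> (\<forall>j<length Us'. orthcols (Us' ! j))"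
        and onb: "onb_of Qh (hcat (tr (matz 0 C1k)) (tr (matz 0 C0hk)))"
      have wfk': "ttn_wf (TN Ck Ysk)" using wfk Yk by simp
      have R': "fst (Rs ! k) = [fst Ck ! 0, fst Ck ! 0]"
        using R wfC(2) k Yk ncols_Ubasis_TN[OF wfk'] by simp
      have "mprods C0hk Us' = ttnX (TN (mode_prod Ck 0 (Rs ! k)) Ysk)" "\<forall>j<length Us'. orthcols (Us' ! j)"
        using IH ttn_wf_TN_mode_prod_0[OF wfk' R'] step.prems(2) by blast+
      from augmented_node_basis[OF wfk' R' R(2) step.prems(2) run this onb] show ?thesis
        using Yk Xk Uk by simp
    qed
  qed
  have "mprods (mprods C0 (map (\<lambda>k. mmul (tr (Uhs ! k)) (map Ubasis Ys ! k)) [0..<length (map Ubasis Ys)]))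
      Uhs = mprods C0 (map Ubasis Ys)"
    by (rule mprods_projected_connection[where Qs = Qs and Rs = Rs]) (use wfC lU child step(8) in auto)
  moreover have "map (\<lambda>k. mmul (tr (Uhs ! k)) (map Ubasis Ys ! k)) [0..<length (map Ubasis Ys)] = Mhs"
    unfolding step(5) by (rule map_cong) auto
  ultimately have "mprods C0h Uhs = mprods C0 (map Ubasis Ys)"
    using step(6) by simp
  then show ?case using lU child by (simp add: ttnX_TN del: ttnX.simps)
qed

theorem theorem6p4:
  fixes C0 :: tsr and Ys :: "ttn list"
    and E :: "tsr \<Rightarrow> real" and G :: "tsr \<Rightarrow> tsr"
    and t0 t1 :: real
    and Uhs :: "tsr list" and c :: "real \<Rightarrow> tsr" and Y1 :: ttn and C0h :: tsr
  assumes wf: "ttn_wf (TN C0 Ys)" and root_rank: "fst C0 ! 0 = 1"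
    and orth: "ttn_orth (TN C0 Ys)" and ftr: "ttn_ftr (TN C0 Ys)"
    and grad: "grad_C1 (fst (ttnX (TN C0 Ys))) E G"
    and t01: "t0 < t1"
    and run: "rai (TN C0 Ys) (\<lambda>t Y. tneg (G Y)) t0 t1 Uhs c Y1 C0h"
  shows "E (ttnX Y1) \<le> E (ttnX (TN C0 Ys))
           - (INF \<mu>\<in>{0..1}. tnorm (mprods (G (mprods (c (t0 + \<mu> * (t1 - t0))) Uhs)) (map tr Uhs)))\<^sup>2
             * (t1 - t0)"
proof -
  have start: "mprods C0h Uhs = ttnX (TN C0 Ys)"
    using rai_reproduces_start[OF run wf] t01 by simp
  obtain C0' Ys' Xhs where out: "TN C0 Ys = TN C0' Ys'" "Y1 = TN (c t1) Xhs" "Uhs = map Ubasis Xhs"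
    "length Xhs = length Ys'" "length (fst C0h) = length (fst C0')"
    "\<forall>k<length Ys'. fst C0h ! Suc k = ncols (Uhs ! k)"
    by (rule rai_shapes[OF run _ wf]) (use t01 in simp_all)
  have ode: "ode_sol (\<lambda>t C. mprods (tneg (G (mprods C Uhs))) (map tr Uhs)) t0 t1 C0h c"
    using run by cases simp
  have "E (mprods (c t1) Uhs) \<le> E (mprods C0h Uhs)
     - (INF \<mu>\<in>{0..1}. tnorm (mprods (G (mprods (c (t0 + \<mu> * (t1 - t0))) Uhs)) (map tr Uhs)))\<^sup>2 * (t1 - t0)"
  proof (rule galerkin_energy_decay[OF grad t01 ode])
    show "fst (mprods C0h Uhs) = fst (ttnX (TN C0 Ys))" using start by simp
  qed (use wf out in simp_all)
  moreover have "ttnX Y1 = mprods (c t1) Uhs"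
    using out by (simp add: Ubasis_def[abs_def])
  ultimately show ?thesis using start by simp
qed

end
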